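(* Let $k$ be a field and let $I\subseteq k[x_0,\ldots,x_n]$ be a homogeneous ideal of dimension $d\ge0$. Then \[h_I(m)=\binom{m+d+1}{d+1}-\binom{m-\deg I+d+1}{d+1}\qquad\text{for all } m\ge1\] if and only if there exist linearly independent linear forms $u_1,\ldots,u_{n-d-1}\in k[x_0,\ldots,x_n]$ and a homogeneous polynomial $f\notin(u_1,\ldots,u_{n-d-1})$ such that $I=(u_1,\ldots,u_{n-d-1},f)$.
   Context: The dimension of a homogeneous ideal is the dimension of the projective variety it defines in $\mathbb P^n(\bar k)$. $h_I(m):=\dim_k(k[x_0,\ldots,x_n]/I)_m$. If $I$ has dimension $d\ge0$ and Hilbert polynomial with leading term $a_dt^d$, then $\deg I:=d!\,a_d$. Binomial coefficients $\binom{a}{b}$ with integer $a<b$ are taken to be $0$. *)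

theory Defs
  imports "HOL-Library.Poly_Mapping" "HOL-Computational_Algebra.Polynomial"
begin

(* Polynomials in the variables x_0,...,x_n over a coefficient type 'a:
   monomials are finitely supported exponent vectors nat =>0 nat,
   polynomials are finitely supported coefficient functions on monomials. *)
type_synonym 'a mpoly = "(nat \<Rightarrow>\<^sub>0 nat) \<Rightarrow>\<^sub>0 'a"

definition mon_deg :: "(nat \<Rightarrow>\<^sub>0 nat) \<Rightarrow> nat" where
  "mon_deg mon = (\<Sum>i\<in>Poly_Mapping.keys mon. Poly_Mapping.lookup mon i)"

definition polys :: "nat \<Rightarrow> ('a::zero) mpoly set" where
  "polys n = {p. \<forall>mon\<in>Poly_Mapping.keys p. Poly_Mapping.keys mon \<subseteq> {..n}}"

definition mconst :: "'a::zero \<Rightarrow> 'a mpoly" where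
  "mconst c = Poly_Mapping.single 0 c"

definition msmult :: "'a::comm_ring_1 \<Rightarrow> 'a mpoly \<Rightarrow> 'a mpoly" where
  "msmult c p = mconst c * p"

(* homogeneous of degree m (the zero polynomial is homogeneous of every degree) *)
definition homog_of_deg :: "nat \<Rightarrow> ('a::zero) mpoly \<Rightarrow> bool" where
  "homog_of_deg m p \<longleftrightarrow> (\<forall>mon\<in>Poly_Mapping.keys p. mon_deg mon = m)"

definition homogeneous :: "('a::zero) mpoly \<Rightarrow> bool" where
  "homogeneous p \<longleftrightarrow> (\<exists>m. homog_of_deg m p)"

definition hcomp :: "nat \<Rightarrow> ('a::zero) mpoly \<Rightarrow> 'a mpoly" where
  "hcomp m p = Abs_poly_mapping (\<lambda>mon. if mon_deg mon = m then Poly_Mapping.lookup p mon else 0)"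

definition graded_part :: "nat \<Rightarrow> nat \<Rightarrow> ('a::zero) mpoly set" where
  "graded_part n m = {p \<in> polys n. homog_of_deg m p}"

definition is_ideal :: "nat \<Rightarrow> ('a::comm_ring_1) mpoly set \<Rightarrow> bool" where
  "is_ideal n I \<longleftrightarrow> I \<subseteq> polys n \<and> 0 \<in> I \<and> (\<forall>p\<in>I. \<forall>q\<in>I. p + q \<in> I)
     \<and> (\<forall>p\<in>polys n. \<forall>q\<in>I. p * q \<in> I)"

definition gen_ideal :: "nat \<Rightarrow> ('a::comm_ring_1) mpoly set \<Rightarrow> 'a mpoly set" where
  "gen_ideal n S = \<Inter>{J. is_ideal n J \<and> S \<subseteq> J}"

definition homogeneous_ideal :: "nat \<Rightarrow> ('a::comm_ring_1) mpoly set \<Rightarrow> bool" where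
  "homogeneous_ideal n I \<longleftrightarrow> is_ideal n I \<and> (\<forall>p\<in>I. \<forall>m. hcomp m p \<in> I)"

(* Hilbert function h_I(m) = dim_k (k[x_0..x_n]/I)_m = dim_k R_m - dim_k I_m *)
definition hilbert_fun :: "nat \<Rightarrow> ('a::field) mpoly set \<Rightarrow> nat \<Rightarrow> nat" where
  "hilbert_fun n I m =
     vector_space.dim (msmult :: 'a \<Rightarrow> 'a mpoly \<Rightarrow> 'a mpoly) (graded_part n m)
     - vector_space.dim (msmult :: 'a \<Rightarrow> 'a mpoly \<Rightarrow> 'a mpoly) (I \<inter> graded_part n m)"

definition hilbert_poly :: "nat \<Rightarrow> ('a::field) mpoly set \<Rightarrow> rat poly" where
  "hilbert_poly n I = (THE P. \<forall>\<^sub>F m in sequentially. of_nat (hilbert_fun n I m) = poly P (of_nat m))"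

definition ideal_degree :: "nat \<Rightarrow> ('a::field) mpoly set \<Rightarrow> nat \<Rightarrow> rat" where
  "ideal_degree n I d = of_nat (fact d) * coeff (hilbert_poly n I) d"

definition ibinom :: "rat \<Rightarrow> nat \<Rightarrow> rat" where
  "ibinom a b = (if a < of_nat b then 0 else a gchoose b)"

definition eval_mp :: "('a::zero \<Rightarrow> 'b::comm_semiring_1) \<Rightarrow> 'a mpoly \<Rightarrow> (nat \<Rightarrow> 'b) \<Rightarrow> 'b" where
  "eval_mp \<phi> p x = (\<Sum>mon\<in>Poly_Mapping.keys p. \<phi> (Poly_Mapping.lookup p mon) * (\<Prod>i\<in>Poly_Mapping.keys mon. x i ^ Poly_Mapping.lookup mon i))"

definition is_field_emb :: "('a::field \<Rightarrow> 'b::field) \<Rightarrow> bool" where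
  "is_field_emb \<phi> \<longleftrightarrow> (\<forall>a b. \<phi> (a + b) = \<phi> a + \<phi> b) \<and> (\<forall>a b. \<phi> (a * b) = \<phi> a * \<phi> b)
      \<and> \<phi> 1 = 1"

definition alg_closed :: "'b::field itself \<Rightarrow> bool" where
  "alg_closed _ \<longleftrightarrow> (\<forall>p :: 'b poly. degree p > 0 \<longrightarrow> (\<exists>x. poly p x = 0))"

definition is_alg_closure :: "('a::field \<Rightarrow> 'b::field) \<Rightarrow> bool" where
  "is_alg_closure \<phi> \<longleftrightarrow> is_field_emb \<phi> \<and> alg_closed TYPE('b)
     \<and> (\<forall>y. \<exists>p :: 'a poly. p \<noteq> 0 \<and> poly (map_poly \<phi> p) y = 0)"

(* points of P^n(K), represented by their nonzero homogeneous coordinate vectors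
   (all sets considered below are invariant under scaling) *)
definition proj_pts :: "nat \<Rightarrow> (nat \<Rightarrow> 'b::field) set" where
  "proj_pts n = {x. (\<forall>i>n. x i = 0) \<and> (\<exists>i\<le>n. x i \<noteq> 0)}"

definition zariski_closed :: "nat \<Rightarrow> (nat \<Rightarrow> 'b::field) set \<Rightarrow> bool" where
  "zariski_closed n Z \<longleftrightarrow> (\<exists>S :: 'b mpoly set. S \<subseteq> polys n \<and> (\<forall>q\<in>S. homogeneous q)
      \<and> Z = {x \<in> proj_pts n. \<forall>q\<in>S. eval_mp id q x = 0})"

definition zariski_irreducible :: "nat \<Rightarrow> (nat \<Rightarrow> 'b::field) set \<Rightarrow> bool" where
  "zariski_irreducible n Z \<longleftrightarrow> Z \<noteq> {} \<and>
     (\<forall>A B. zariski_closed n A \<longrightarrow> zariski_closed n B \<longrightarrow> Z \<subseteq> A \<union> B \<longrightarrow> Z \<subseteq> A \<or> Z \<subseteq> B)"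

definition proj_variety :: "nat \<Rightarrow> ('a::field \<Rightarrow> 'b::field) \<Rightarrow> 'a mpoly set \<Rightarrow> (nat \<Rightarrow> 'b) set" where
  "proj_variety n \<phi> I = {x \<in> proj_pts n. \<forall>p\<in>I. eval_mp \<phi> p x = 0}"

definition irred_chain :: "nat \<Rightarrow> (nat \<Rightarrow> 'b::field) set \<Rightarrow> nat \<Rightarrow> (nat \<Rightarrow> (nat \<Rightarrow> 'b) set) \<Rightarrow> bool" where
  "irred_chain n V l Z \<longleftrightarrow> (\<forall>i\<le>l. zariski_closed n (Z i) \<and> zariski_irreducible n (Z i) \<and> Z i \<subseteq> V)
     \<and> (\<forall>i<l. Z i \<subset> Z (Suc i))"

definition has_proj_dim :: "nat \<Rightarrow> ('a::field \<Rightarrow> 'b::field) \<Rightarrow> 'a mpoly set \<Rightarrow> nat \<Rightarrow> bool" where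
  "has_proj_dim n \<phi> I d \<longleftrightarrow>
     (\<exists>Z. irred_chain n (proj_variety n \<phi> I) d Z)
     \<and> (\<forall>l Z. irred_chain n (proj_variety n \<phi> I) l Z \<longrightarrow> l \<le> d)"

definition lin_indep_linear_forms :: "nat \<Rightarrow> nat \<Rightarrow> (nat \<Rightarrow> ('a::field) mpoly) \<Rightarrow> bool" where
  "lin_indep_linear_forms n r u \<longleftrightarrow> (\<forall>i<r. u i \<in> graded_part n 1)
     \<and> (\<forall>c :: nat \<Rightarrow> 'a. (\<Sum>i<r. msmult (c i) (u i)) = 0 \<longrightarrow> (\<forall>i<r. c i = 0))"

end

theory Submission
  imports Defs
begin

text \<open>
  Extend the linear forms \<open>u\<^sub>1, \<dots>, u\<^sub>n\<^sub>-\<^sub>d\<^sub>-\<^sub>1\<close> by variables \<open>x\<^sub>i\<close>, \<open>i \<in> Q\<close> with \<open>|Q| = d + 2\<close>,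
  to a basis of the linear forms. Substituting for every variable its component along
  \<open>span {x\<^sub>i | i \<in> Q}\<close> is a graded retraction \<open>\<sigma>\<close> of \<open>k[x\<^sub>0, \<dots>, x\<^sub>n]\<close> onto \<open>k[x\<^sub>i | i \<in> Q]\<close> whose
  kernel is \<open>(u)\<close>, so every graded piece of an ideal \<open>I \<supseteq> (u)\<close> splits as \<open>(u)\<^sub>m \<oplus> \<sigma>(I\<^sub>m)\<close>.
  For \<open>I = (u, f)\<close> with \<open>f\<close> of degree \<open>e\<close>, \<open>\<sigma>(I\<^sub>m)\<close> consists of the degree-\<open>m\<close> multiples of the
  nonzero form \<open>\<sigma>(f)\<close> in a polynomial ring in \<open>d + 2\<close> variables, which gives
  \<open>h\<^sub>I(m) = C(m+d+1, d+1) - C(m-e+d+1, d+1)\<close> and \<open>deg I = e\<close>.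

  Conversely, the formula forces \<open>deg I\<close> to be an integer \<open>e\<close>, and \<open>e \<ge> 1\<close> because \<open>I\<close> does not contain
  all variables (\<open>V(I) \<noteq> \<emptyset>\<close>; this is all that is used of the dimension hypothesis). Then
  \<open>h\<^sub>I(1) \<le> d + 2\<close> yields \<open>n - d - 1\<close> independent linear forms \<open>u\<close> in \<open>I\<close>, the value \<open>h\<^sub>I(e)\<close> yields a
  form \<open>f \<in> I\<^sub>e\<close> outside \<open>(u)\<close>, and \<open>(u, f) \<subseteq> I\<close> have the same Hilbert function, so the
  homogeneous ideal \<open>I\<close> equals \<open>(u, f)\<close>.
\<close>

abbreviation lookup :: "('b \<Rightarrow>\<^sub>0 'c::zero) \<Rightarrow> 'b \<Rightarrow> 'c" where
  "lookup \<equiv> Poly_Mapping.lookup"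

abbreviation keys :: "('b \<Rightarrow>\<^sub>0 'c::zero) \<Rightarrow> 'b set" where
  "keys \<equiv> Poly_Mapping.keys"

abbreviation single :: "'b \<Rightarrow> 'c::zero \<Rightarrow> 'b \<Rightarrow>\<^sub>0 'c" where
  "single \<equiv> Poly_Mapping.single"

lemma lookup_single_if: "lookup (single k v) k' = (if k = k' then v else 0)"
  by (simp add: lookup_single when_def)

lemma single_1_eq_iff [simp]: "single x (1::'a::zero_neq_one) = single y 1 \<longleftrightarrow> x = y"
  by (metis lookup_single_eq lookup_single_not_eq zero_neq_one)

lemma lookup_msmult [simp]: "lookup (msmult c p) mon = c * lookup p mon"
  unfolding msmult_def mconst_def mult_map_scale_conv_mult[symmetric]
  by transfer (simp add: when_def)

interpretation V: vector_space "msmult :: 'a::field \<Rightarrow> 'a mpoly \<Rightarrow> 'a mpoly"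
  by unfold_locales (auto intro!: poly_mapping_eqI simp: algebra_simps lookup_add)

lemma keys_msmult: "keys (msmult c p) \<subseteq> keys p"
  by (auto simp: in_keys_iff)

lemma keys_diff_subset: "keys (p - q) \<subseteq> keys p \<union> keys q"
  by (auto simp: in_keys_iff lookup_minus)

lemma mpoly_eq_sum_single: "p = (\<Sum>mon\<in>keys p. single mon (lookup p mon))"
  by (rule poly_mapping_eqI) (simp add: lookup_sum lookup_single_if in_keys_iff)

lemma msmult_single_1: "msmult c (single mon 1) = single mon (c :: 'a::field)"
  by (rule poly_mapping_eqI) (simp add: lookup_single_if)

lemma mpoly_eq_sum_msmult: "p = (\<Sum>mon\<in>keys p. msmult (lookup p mon) (single mon (1::'a::field)))"
  by (subst mpoly_eq_sum_single) (simp add: msmult_single_1)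

lemma msmult_mult_msmult: "msmult c p * msmult d q = msmult (c * d) (p * q :: ('a::field) mpoly)"
  by (simp add: msmult_def mconst_def mult_single algebra_simps)

lemma mult_msmult_right: "p * msmult c q = msmult c (p * q :: ('a::field) mpoly)"
  by (simp add: msmult_def mult.left_commute)

lemma mon_deg_eq_sum:
  assumes "finite A" "keys mon \<subseteq> A"
  shows "mon_deg mon = (\<Sum>i\<in>A. lookup mon i)"
  unfolding mon_deg_def
  by (rule sum.mono_neutral_left) (use assms in \<open>auto simp: in_keys_iff\<close>)

lemma mon_deg_add: "mon_deg (a + b) = mon_deg a + mon_deg b"
proof -
  let ?A = "keys a \<union> keys b"
  have "mon_deg (a + b) = (\<Sum>i\<in>?A. lookup (a + b) i)"
    by (rule mon_deg_eq_sum) (use keys_add[of a b] in auto)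
  also have "\<dots> = (\<Sum>i\<in>?A. lookup a i) + (\<Sum>i\<in>?A. lookup b i)"
    by (simp add: lookup_add sum.distrib)
  also have "\<dots> = mon_deg a + mon_deg b"
    by (subst (1 2) mon_deg_eq_sum[of ?A]) auto
  finally show ?thesis .
qed

lemma mon_deg_zero [simp]: "mon_deg 0 = 0"
  by (simp add: mon_deg_def)

lemma mon_deg_single [simp]: "mon_deg (single i k) = k"
  by (simp add: mon_deg_def)

lemma mon_deg_eq_0_iff: "mon_deg mon = 0 \<longleftrightarrow> mon = 0"
proof
  assume "mon_deg mon = 0"
  then have "\<forall>i\<in>keys mon. lookup mon i = 0" unfolding mon_deg_def by simp
  then show "mon = 0" by (intro poly_mapping_eqI) (metis in_keys_iff lookup_zero)
qed simp

lemma lookup_le_mon_deg: "lookup mon i \<le> mon_deg mon"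
proof (cases "i \<in> keys mon")
  case True
  then show ?thesis unfolding mon_deg_def by (intro member_le_sum) auto
qed (simp add: in_keys_iff)

lemma mon_deg_eq_1D: "mon_deg mon = 1 \<Longrightarrow> \<exists>i. mon = single i 1"
proof -
  assume d: "mon_deg mon = 1"
  then obtain i where i: "i \<in> keys mon"
    using keys_eq_empty by fastforce
  have "mon_deg mon = lookup mon i + (\<Sum>j\<in>keys mon - {i}. lookup mon j)"
    unfolding mon_deg_def using sum.remove[OF finite_keys i] by simp
  moreover have "lookup mon i \<ge> 1" using i by (simp add: in_keys_iff)
  ultimately have "lookup mon i = 1" and rest: "(\<Sum>j\<in>keys mon - {i}. lookup mon j) = 0"
    using d by auto
  moreover have "lookup mon j = 0" if "j \<noteq> i" for j
    using rest that by (simp add: in_keys_iff) blast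
  ultimately have "mon = single i 1" by (intro poly_mapping_eqI) (auto simp: lookup_single_if)
  then show ?thesis ..
qed

definition mvar :: "nat \<Rightarrow> ('a::comm_ring_1) mpoly" where
  "mvar i = single (single i 1) 1"

definition polys_in :: "nat set \<Rightarrow> ('a::zero) mpoly set" where
  "polys_in Q = {p. \<forall>mon\<in>keys p. keys mon \<subseteq> Q}"

definition forms_in :: "nat set \<Rightarrow> nat \<Rightarrow> ('a::zero) mpoly set" where
  "forms_in Q m = {p \<in> polys_in Q. homog_of_deg m p}"

lemma polys_eq_polys_in: "polys n = polys_in {..n}"
  by (simp add: polys_def polys_in_def)

lemma graded_part_eq_forms_in: "graded_part n m = forms_in {..n} m"
  by (simp add: graded_part_def forms_in_def polys_eq_polys_in)

lemma polys_in_0 [simp]: "0 \<in> polys_in Q"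
  by (simp add: polys_in_def)

lemma polys_in_1 [simp]: "1 \<in> (polys_in Q :: ('a::comm_ring_1) mpoly set)"
  by (simp add: polys_in_def)

lemma polys_in_single: "keys mon \<subseteq> Q \<Longrightarrow> single mon c \<in> polys_in Q"
  by (simp add: polys_in_def)

lemma polys_in_add: "p \<in> polys_in Q \<Longrightarrow> q \<in> polys_in Q \<Longrightarrow> p + q \<in> polys_in Q"
  unfolding polys_in_def using keys_add[of p q] by blast

lemma polys_in_diff:
  "p \<in> polys_in Q \<Longrightarrow> q \<in> polys_in Q \<Longrightarrow> p - q \<in> (polys_in Q :: ('a::comm_ring_1) mpoly set)"
  unfolding polys_in_def using keys_diff_subset[of p q] by blast

lemma polys_in_msmult: "p \<in> polys_in Q \<Longrightarrow> msmult c p \<in> (polys_in Q :: ('a::field) mpoly set)"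
  unfolding polys_in_def using keys_msmult[of c p] by blast

lemma polys_in_sum: "(\<And>a. a \<in> A \<Longrightarrow> f a \<in> polys_in Q) \<Longrightarrow> sum f A \<in> polys_in Q"
  by (induction A rule: infinite_finite_induct) (auto intro: polys_in_add)

lemma polys_in_mult:
  assumes "p \<in> polys_in Q" "q \<in> polys_in Q"
  shows "p * q \<in> (polys_in Q :: ('a::comm_ring_1) mpoly set)"
  unfolding polys_in_def mem_Collect_eq
proof
  fix mon assume "mon \<in> keys (p * q)"
  then obtain a b where "mon = a + b" "a \<in> keys p" "b \<in> keys q"
    using keys_mult by blast
  then show "keys mon \<subseteq> Q" using assms keys_add[of a b] unfolding polys_in_def by blast
qed

lemma polys_in_power: "p \<in> polys_in Q \<Longrightarrow> p ^ k \<in> (polys_in Q :: ('a::comm_ring_1) mpoly set)"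
  by (induction k) (auto intro: polys_in_mult)

lemma polys_in_prod:
  "(\<And>a. a \<in> A \<Longrightarrow> f a \<in> polys_in Q) \<Longrightarrow> prod f A \<in> (polys_in Q :: ('a::comm_ring_1) mpoly set)"
  by (induction A rule: infinite_finite_induct) (auto intro: polys_in_mult)

lemma polys_in_mono: "Q \<subseteq> Q' \<Longrightarrow> polys_in Q \<subseteq> polys_in Q'"
  unfolding polys_in_def by blast

lemma homog_of_deg_0 [simp]: "homog_of_deg m 0"
  by (simp add: homog_of_deg_def)

lemma homog_of_deg_1 [simp]: "homog_of_deg 0 (1 :: ('a::comm_ring_1) mpoly)"
  by (simp add: homog_of_deg_def)

lemma homog_of_deg_single: "mon_deg mon = m \<Longrightarrow> homog_of_deg m (single mon c)"
  by (simp add: homog_of_deg_def)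

lemma homog_of_deg_add: "homog_of_deg m p \<Longrightarrow> homog_of_deg m q \<Longrightarrow> homog_of_deg m (p + q)"
  unfolding homog_of_deg_def using keys_add[of p q] by blast

lemma homog_of_deg_msmult: "homog_of_deg m p \<Longrightarrow> homog_of_deg m (msmult c p :: ('a::field) mpoly)"
  unfolding homog_of_deg_def using keys_msmult[of c p] by blast

lemma homog_of_deg_sum: "(\<And>a. a \<in> A \<Longrightarrow> homog_of_deg m (f a)) \<Longrightarrow> homog_of_deg m (sum f A)"
  by (induction A rule: infinite_finite_induct) (auto intro: homog_of_deg_add)

lemma homog_of_deg_mult:
  assumes "homog_of_deg a p" "homog_of_deg b q"
  shows "homog_of_deg (a + b) (p * q :: ('a::comm_ring_1) mpoly)"
  unfolding homog_of_deg_def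
proof
  fix mon assume "mon \<in> keys (p * q)"
  then obtain x y where "mon = x + y" "x \<in> keys p" "y \<in> keys q"
    using keys_mult by blast
  then show "mon_deg mon = a + b" using assms by (simp add: homog_of_deg_def mon_deg_add)
qed

lemma homog_of_deg_power:
  "homog_of_deg a p \<Longrightarrow> homog_of_deg (k * a) (p ^ k :: ('a::comm_ring_1) mpoly)"
  by (induction k) (simp_all add: homog_of_deg_mult)

lemma homog_of_deg_prod:
  "finite A \<Longrightarrow> (\<And>x. x \<in> A \<Longrightarrow> homog_of_deg (g x) (f x)) \<Longrightarrow>
     homog_of_deg (\<Sum>x\<in>A. g x) (prod f A :: ('a::comm_ring_1) mpoly)"
  by (induction A rule: finite_induct) (simp_all add: homog_of_deg_mult)

lemma forms_in_0 [simp]: "0 \<in> forms_in Q m"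
  by (simp add: forms_in_def)

lemma forms_in_add: "p \<in> forms_in Q m \<Longrightarrow> q \<in> forms_in Q m \<Longrightarrow> p + q \<in> forms_in Q m"
  by (simp add: forms_in_def polys_in_add homog_of_deg_add)

lemma forms_in_msmult: "p \<in> forms_in Q m \<Longrightarrow> msmult c p \<in> (forms_in Q m :: ('a::field) mpoly set)"
  by (simp add: forms_in_def polys_in_msmult homog_of_deg_msmult)

lemma forms_in_sum: "(\<And>a. a \<in> A \<Longrightarrow> f a \<in> forms_in Q m) \<Longrightarrow> sum f A \<in> forms_in Q m"
  by (simp add: forms_in_def polys_in_sum homog_of_deg_sum)

lemma forms_in_mult:
  "p \<in> forms_in Q a \<Longrightarrow> q \<in> forms_in Q b \<Longrightarrow> p * q \<in> (forms_in Q (a + b) :: ('a::comm_ring_1) mpoly set)"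
  by (simp add: forms_in_def polys_in_mult homog_of_deg_mult)

lemma subspace_forms_in: "V.subspace (forms_in Q m :: ('a::field) mpoly set)"
  by (simp add: V.subspace_def forms_in_add forms_in_msmult)

lemma mvar_in_forms_in: "i \<in> Q \<Longrightarrow> mvar i \<in> forms_in Q 1"
  by (simp add: mvar_def forms_in_def polys_in_single homog_of_deg_single)

lemma mvar_in_polys: "i \<le> n \<Longrightarrow> mvar i \<in> polys n"
  by (simp add: mvar_def polys_eq_polys_in polys_in_single)

lemma mvar_in_graded_part: "i \<le> n \<Longrightarrow> mvar i \<in> graded_part n 1"
  unfolding graded_part_eq_forms_in by (rule mvar_in_forms_in) simp

lemma mconst_in_polys: "mconst c \<in> polys n"
  by (simp add: mconst_def polys_eq_polys_in polys_in_single)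

lemma graded_part_0_eq_mconst: "p \<in> graded_part n 0 \<Longrightarrow> p = mconst (lookup p 0)"
proof (rule poly_mapping_eqI)
  fix mon assume p: "p \<in> graded_part n 0"
  show "lookup p mon = lookup (mconst (lookup p 0)) mon"
  proof (cases "mon \<in> keys p")
    case True
    then have "mon = 0" using p by (auto simp: graded_part_def homog_of_deg_def mon_deg_eq_0_iff)
    then show ?thesis by (simp add: mconst_def)
  qed (auto simp: mconst_def lookup_single_if in_keys_iff)
qed

subsection \<open>Substitution of polynomials for the variables\<close>

definition mon_subst :: "(nat \<Rightarrow> ('a::comm_ring_1) mpoly) \<Rightarrow> (nat \<Rightarrow>\<^sub>0 nat) \<Rightarrow> 'a mpoly" where
  "mon_subst \<tau> mon = (\<Prod>i\<in>keys mon. \<tau> i ^ lookup mon i)"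

definition msubst :: "(nat \<Rightarrow> ('a::field) mpoly) \<Rightarrow> 'a mpoly \<Rightarrow> 'a mpoly" where
  "msubst \<tau> p = (\<Sum>mon\<in>keys p. msmult (lookup p mon) (mon_subst \<tau> mon))"

lemma mon_subst_eq_prod:
  assumes "finite A" "keys mon \<subseteq> A"
  shows "mon_subst \<tau> mon = (\<Prod>i\<in>A. \<tau> i ^ lookup mon i)"
  unfolding mon_subst_def
  by (rule prod.mono_neutral_left) (use assms in \<open>auto simp: in_keys_iff\<close>)

lemma mon_subst_add: "mon_subst \<tau> (a + b) = mon_subst \<tau> a * mon_subst \<tau> b"
proof -
  let ?A = "keys a \<union> keys b"
  have "mon_subst \<tau> (a + b) = (\<Prod>i\<in>?A. \<tau> i ^ lookup (a + b) i)"
    by (rule mon_subst_eq_prod) (use keys_add[of a b] in auto)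
  also have "\<dots> = (\<Prod>i\<in>?A. \<tau> i ^ lookup a i) * (\<Prod>i\<in>?A. \<tau> i ^ lookup b i)"
    by (simp add: lookup_add power_add prod.distrib)
  also have "\<dots> = mon_subst \<tau> a * mon_subst \<tau> b"
    by (subst (1 2) mon_subst_eq_prod[of ?A]) auto
  finally show ?thesis .
qed

lemma mon_subst_single_1 [simp]: "mon_subst \<tau> (single i 1) = \<tau> i"
  by (simp add: mon_subst_def)

lemma msubst_eq_sum:
  assumes "finite A" "keys p \<subseteq> A"
  shows "msubst \<tau> p = (\<Sum>mon\<in>A. msmult (lookup p mon) (mon_subst \<tau> mon))"
  unfolding msubst_def
  by (rule sum.mono_neutral_left) (use assms in \<open>auto simp: in_keys_iff\<close>)

lemma msubst_add: "msubst \<tau> (p + q) = msubst \<tau> p + msubst \<tau> q"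
proof -
  let ?A = "keys p \<union> keys q"
  have "msubst \<tau> (p + q) = (\<Sum>mon\<in>?A. msmult (lookup (p + q) mon) (mon_subst \<tau> mon))"
    by (rule msubst_eq_sum) (use keys_add[of p q] in auto)
  also have "\<dots> = (\<Sum>mon\<in>?A. msmult (lookup p mon) (mon_subst \<tau> mon))
                 + (\<Sum>mon\<in>?A. msmult (lookup q mon) (mon_subst \<tau> mon))"
    by (simp add: lookup_add V.scale_left_distrib sum.distrib)
  also have "\<dots> = msubst \<tau> p + msubst \<tau> q"
    by (subst (1 2) msubst_eq_sum[of ?A]) auto
  finally show ?thesis .
qed

lemma msubst_msmult: "msubst \<tau> (msmult c p) = msmult c (msubst \<tau> p)"
proof -
  have "msubst \<tau> (msmult c p) = (\<Sum>mon\<in>keys p. msmult (lookup (msmult c p) mon) (mon_subst \<tau> mon))"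
    by (rule msubst_eq_sum) (auto simp: keys_msmult)
  also have "\<dots> = msmult c (msubst \<tau> p)"
    by (simp add: msubst_def V.scale_sum_right)
  finally show ?thesis .
qed

lemma module_hom_msubst: "module_hom msmult msmult (msubst \<tau>)"
  by (simp add: module_hom_iff V.module_axioms msubst_add msubst_msmult)

lemma msubst_0 [simp]: "msubst \<tau> 0 = 0"
  by (simp add: msubst_def)

lemma msubst_diff: "msubst \<tau> (p - q) = msubst \<tau> p - msubst \<tau> q"
  by (rule module_hom.diff[OF module_hom_msubst])

lemma msubst_single: "msubst \<tau> (single mon c) = msmult c (mon_subst \<tau> mon)"
  by (cases "c = 0") (auto simp: msubst_def)

lemma msubst_mult: "msubst \<tau> (p * q) = msubst \<tau> p * msubst \<tau> q"
proof -
  interpret module_hom msmult msmult "msubst \<tau>" by (rule module_hom_msubst)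
  have single: "msubst \<tau> (single a c * single b d) = msubst \<tau> (single a c) * msubst \<tau> (single b d)"
    for a b c d
    by (simp add: mult_single msubst_single mon_subst_add msmult_mult_msmult)
  have "p * q = (\<Sum>a\<in>keys p. single a (lookup p a)) * (\<Sum>b\<in>keys q. single b (lookup q b))"
    by (subst (1) mpoly_eq_sum_single[of p], subst (1) mpoly_eq_sum_single[of q]) (rule refl)
  also have "\<dots> = (\<Sum>a\<in>keys p. \<Sum>b\<in>keys q. single a (lookup p a) * single b (lookup q b))"
    by (rule sum_product)
  finally have "msubst \<tau> (p * q)
      = (\<Sum>a\<in>keys p. \<Sum>b\<in>keys q. msubst \<tau> (single a (lookup p a)) * msubst \<tau> (single b (lookup q b)))"
    by (simp add: sum single)
  also have "\<dots> = (\<Sum>a\<in>keys p. msubst \<tau> (single a (lookup p a))) * (\<Sum>b\<in>keys q. msubst \<tau> (single b (lookup q b)))"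
    by (rule sum_product[symmetric])
  also have "\<dots> = msubst \<tau> p * msubst \<tau> q"
    by (simp flip: sum mpoly_eq_sum_single)
  finally show ?thesis .
qed

lemma mon_subst_in_polys_in: "(\<And>i. i \<in> keys mon \<Longrightarrow> \<tau> i \<in> polys_in Q) \<Longrightarrow> mon_subst \<tau> mon \<in> polys_in Q"
  unfolding mon_subst_def by (intro polys_in_prod polys_in_power) auto

lemma msubst_in_polys_in:
  assumes "\<And>i. i \<in> Q' \<Longrightarrow> \<tau> i \<in> polys_in Q" "p \<in> polys_in Q'"
  shows "msubst \<tau> p \<in> polys_in Q"
  unfolding msubst_def
proof (intro polys_in_sum polys_in_msmult mon_subst_in_polys_in)
  fix mon i assume "mon \<in> keys p" "i \<in> keys mon"
  then show "\<tau> i \<in> polys_in Q" using assms unfolding polys_in_def by blast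
qed

lemma mon_subst_in_forms_in:
  assumes "\<And>i. i \<in> keys mon \<Longrightarrow> \<tau> i \<in> forms_in Q 1"
  shows "mon_subst \<tau> mon \<in> forms_in Q (mon_deg mon)"
proof -
  have "homog_of_deg (\<Sum>i\<in>keys mon. lookup mon i * 1) (mon_subst \<tau> mon)"
    unfolding mon_subst_def
    by (intro homog_of_deg_prod homog_of_deg_power) (use assms in \<open>auto simp: forms_in_def\<close>)
  moreover have "mon_subst \<tau> mon \<in> polys_in Q"
    by (rule mon_subst_in_polys_in) (use assms in \<open>auto simp: forms_in_def\<close>)
  ultimately show ?thesis by (simp add: forms_in_def mon_deg_def)
qed

lemma msubst_in_forms_in:
  assumes "\<And>i. i \<in> Q' \<Longrightarrow> \<tau> i \<in> forms_in Q 1" "p \<in> forms_in Q' m"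
  shows "msubst \<tau> p \<in> forms_in Q m"
  unfolding msubst_def
proof (intro forms_in_sum forms_in_msmult)
  fix mon assume mon: "mon \<in> keys p"
  then have "mon_deg mon = m" using assms(2) by (auto simp: forms_in_def homog_of_deg_def)
  moreover have "mon_subst \<tau> mon \<in> forms_in Q (mon_deg mon)"
    by (rule mon_subst_in_forms_in) (use assms mon in \<open>auto simp: forms_in_def polys_in_def\<close>)
  ultimately show "mon_subst \<tau> mon \<in> forms_in Q m" by simp
qed

lemma mvar_power: "mvar i ^ k = (single (single i k) 1 :: ('a::comm_ring_1) mpoly)"
  by (induction k) (simp_all add: mvar_def mult_single single_add[symmetric] add.commute)

lemma prod_single_1: "(\<Prod>i\<in>A. single (f i) (1::'a::comm_ring_1)) = single (\<Sum>i\<in>A. f i) 1"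
  by (induction A rule: infinite_finite_induct) (auto simp: mult_single)

lemma mon_subst_mvar: "mon_subst mvar mon = (single mon 1 :: ('a::comm_ring_1) mpoly)"
proof -
  have "mon_subst mvar mon = (\<Prod>i\<in>keys mon. single (single i (lookup mon i)) (1::'a))"
    by (simp add: mon_subst_def mvar_power)
  also have "\<dots> = single (\<Sum>i\<in>keys mon. single i (lookup mon i)) 1"
    by (rule prod_single_1)
  also have "\<dots> = single mon 1" by (simp flip: mpoly_eq_sum_single)
  finally show ?thesis .
qed

lemma msubst_mvar: "msubst mvar p = (p :: ('a::field) mpoly)"
  unfolding msubst_def mon_subst_mvar msmult_single_1 by (simp flip: mpoly_eq_sum_single)

lemma msubst_cong:
  assumes "\<And>i. i \<in> Q \<Longrightarrow> \<tau> i = \<tau>' i" "p \<in> polys_in Q"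
  shows "msubst \<tau> p = msubst \<tau>' p"
  unfolding msubst_def mon_subst_def
proof (intro sum.cong refl arg_cong[where f = "msmult _"] prod.cong)
  fix mon i assume "mon \<in> keys p" "i \<in> keys mon"
  then have "i \<in> Q" using assms(2) by (auto simp: polys_in_def)
  then show "\<tau> i ^ lookup mon i = \<tau>' i ^ lookup mon i" using assms(1) by simp
qed

lemma msubst_fixes_polys_in:
  assumes "\<And>i. i \<in> Q \<Longrightarrow> \<tau> i = mvar i" "p \<in> polys_in Q"
  shows "msubst \<tau> p = p"
  using msubst_cong[OF assms] msubst_mvar by simp

context
  fixes n :: nat and J :: "('a::field) mpoly set"
  assumes J: "is_ideal n J"
begin

lemma ideal_subset_polys: "J \<subseteq> polys n"
  using J by (simp add: is_ideal_def)

lemma ideal_0: "0 \<in> J"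
  using J by (simp add: is_ideal_def)

lemma ideal_add: "p \<in> J \<Longrightarrow> q \<in> J \<Longrightarrow> p + q \<in> J"
  using J by (simp add: is_ideal_def)

lemma ideal_mult: "p \<in> polys n \<Longrightarrow> q \<in> J \<Longrightarrow> p * q \<in> J"
  using J by (simp add: is_ideal_def)

lemma ideal_mult_right: "p \<in> polys n \<Longrightarrow> q \<in> J \<Longrightarrow> q * p \<in> J"
  using ideal_mult by (simp add: mult.commute)

lemma ideal_msmult: "q \<in> J \<Longrightarrow> msmult c q \<in> J"
  unfolding msmult_def by (rule ideal_mult[OF mconst_in_polys])

lemma ideal_diff: "p \<in> J \<Longrightarrow> q \<in> J \<Longrightarrow> p - q \<in> J"
proof -
  assume "p \<in> J" "q \<in> J"
  moreover have "msmult (-1) q = - q" by (rule poly_mapping_eqI) (simp add: lookup_minus)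
  ultimately show ?thesis using ideal_add[of p "msmult (-1) q"] ideal_msmult[of q "-1"] by simp
qed

lemma ideal_sum: "(\<And>a. a \<in> A \<Longrightarrow> f a \<in> J) \<Longrightarrow> sum f A \<in> J"
  by (induction A rule: infinite_finite_induct) (auto intro: ideal_add ideal_0)

lemma subspace_ideal: "V.subspace J"
  by (simp add: V.subspace_def ideal_0 ideal_add ideal_msmult)

lemma prod_diff_in_ideal:
  assumes "\<And>i. i \<in> A \<Longrightarrow> a i \<in> polys n" "\<And>i. i \<in> A \<Longrightarrow> b i \<in> polys n"
    "\<And>i. i \<in> A \<Longrightarrow> a i - b i \<in> J"
  shows "prod a A - prod b A \<in> J"
  using assms
proof (induction A rule: infinite_finite_induct)
  case (insert x F)
  have "prod a (insert x F) - prod b (insert x F) = a x * (prod a F - prod b F) + (a x - b x) * prod b F"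
    using insert by (simp add: algebra_simps)
  moreover have "a x * (prod a F - prod b F) \<in> J" using insert by (intro ideal_mult) auto
  moreover have "(a x - b x) * prod b F \<in> J" using insert
    by (intro ideal_mult_right) (auto simp: polys_eq_polys_in intro: polys_in_prod)
  ultimately show ?case by (simp add: ideal_add)
qed (simp_all add: ideal_0)

lemma power_diff_in_ideal: "a \<in> polys n \<Longrightarrow> b \<in> polys n \<Longrightarrow> a - b \<in> J \<Longrightarrow> a ^ k - b ^ k \<in> J"
  using prod_diff_in_ideal[of "{..<k}" "\<lambda>_. a" "\<lambda>_. b"] by simp

lemma diff_msubst_in_ideal:
  assumes "\<And>i. i \<le> n \<Longrightarrow> \<tau> i \<in> polys n" "\<And>i. i \<le> n \<Longrightarrow> mvar i - \<tau> i \<in> J"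
    and p: "p \<in> polys n"
  shows "p - msubst \<tau> p \<in> J"
proof -
  have "p - msubst \<tau> p = (\<Sum>mon\<in>keys p. msmult (lookup p mon) (mon_subst mvar mon - mon_subst \<tau> mon))"
    by (subst (1) mpoly_eq_sum_msmult)
       (simp add: msubst_def mon_subst_mvar V.scale_right_diff_distrib sum_subtractf)
  also have "\<dots> \<in> J"
  proof (intro ideal_sum ideal_msmult)
    fix mon assume "mon \<in> keys p"
    then have vars: "keys mon \<subseteq> {..n}" using p by (auto simp: polys_eq_polys_in polys_in_def)
    show "mon_subst mvar mon - mon_subst \<tau> mon \<in> J"
      unfolding mon_subst_def
    proof (rule prod_diff_in_ideal)
      fix i assume "i \<in> keys mon"
      then have i: "i \<le> n" using vars by auto
      show "mvar i ^ lookup mon i \<in> polys n" "\<tau> i ^ lookup mon i \<in> polys n"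
        using mvar_in_polys[OF i] assms(1)[OF i] polys_in_power unfolding polys_eq_polys_in by blast+
      show "mvar i ^ lookup mon i - \<tau> i ^ lookup mon i \<in> J"
        by (rule power_diff_in_ideal[OF mvar_in_polys[OF i] assms(1)[OF i] assms(2)[OF i]])
    qed
  qed
  finally show ?thesis .
qed

lemma ideal_mconst_imp_mvars:
  assumes "mconst c \<in> J" "c \<noteq> 0"
  shows "\<forall>i\<le>n. mvar i \<in> J"
proof (intro allI impI)
  fix i assume "i \<le> n"
  then have "(mvar i * mconst (inverse c)) * mconst c \<in> J"
    by (intro ideal_mult assms(1))
       (simp add: polys_eq_polys_in mvar_in_polys[unfolded polys_eq_polys_in]
         mconst_in_polys[unfolded polys_eq_polys_in] polys_in_mult)
  moreover have "(mvar i * mconst (inverse c)) * mconst c = mvar i"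
    using assms(2) by (simp add: mconst_def mult.assoc mult_single)
  ultimately show "mvar i \<in> J" by simp
qed

end

lemma is_ideal_polys: "is_ideal n (polys n :: ('a::field) mpoly set)"
  by (simp add: is_ideal_def polys_eq_polys_in polys_in_add polys_in_mult)

lemma is_ideal_gen_ideal:
  assumes "S \<subseteq> polys n"
  shows "is_ideal n (gen_ideal n (S :: ('a::field) mpoly set))"
proof -
  let ?F = "{J. is_ideal n J \<and> S \<subseteq> J}"
  have "polys n \<in> ?F" using assms is_ideal_polys by blast
  then show ?thesis
    unfolding gen_ideal_def is_ideal_def[of n "\<Inter>?F"] by (auto simp: is_ideal_def)
qed

lemma gen_ideal_superset: "S \<subseteq> polys n \<Longrightarrow> S \<subseteq> gen_ideal n S"
  unfolding gen_ideal_def by blast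

lemma gen_ideal_least: "is_ideal n J \<Longrightarrow> S \<subseteq> J \<Longrightarrow> gen_ideal n S \<subseteq> J"
  unfolding gen_ideal_def by blast

subsection \<open>Dimension of finite-dimensional subspaces\<close>

definition (in vector_space) finite_dim :: "'b set \<Rightarrow> bool" where
  "finite_dim S \<longleftrightarrow> (\<exists>W. finite W \<and> S \<subseteq> span W)"

context vector_space
begin

lemma finite_dim_subset: "finite_dim B \<Longrightarrow> A \<subseteq> span B \<Longrightarrow> finite_dim A"
  unfolding finite_dim_def by (meson span_minimal subspace_span subset_trans)

lemma independent_card_le_dim:
  assumes "finite_dim B" "independent C" "C \<subseteq> span B"
  shows "finite C \<and> card C \<le> dim B"
proof -
  obtain W where W: "finite W" "B \<subseteq> span W" using assms(1) by (auto simp: finite_dim_def)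
  obtain BB where BB: "BB \<subseteq> B" "independent BB" "B \<subseteq> span BB" "card BB = dim B"
    by (rule basis_exists)
  have "finite BB" using independent_span_bound[OF W(1) BB(2)] BB(1) W(2) by blast
  moreover have "C \<subseteq> span BB"
    using assms(3) BB(3) by (metis span_mono span_span subset_trans)
  ultimately show ?thesis using independent_span_bound[of BB C] assms(2) BB(4) by simp
qed

lemma dim_le_if_subset_span:
  assumes "finite_dim B" "A \<subseteq> span B"
  shows "dim A \<le> dim B"
proof -
  obtain BA where "BA \<subseteq> A" "independent BA" "card BA = dim A"
    by (rule basis_exists)
  then show ?thesis using independent_card_le_dim[OF assms(1), of BA] assms(2) by auto
qed

lemma subspace_eq_if_dim_le:
  assumes "finite_dim B" "subspace A" "A \<subseteq> B" "dim B \<le> dim A"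
  shows "A = B"
proof (rule ccontr)
  assume "A \<noteq> B"
  then obtain x where x: "x \<in> B" "x \<notin> A" using assms(3) by blast
  obtain BA where BA: "BA \<subseteq> A" "independent BA" "A \<subseteq> span BA" "card BA = dim A"
    by (rule basis_exists)
  have "span BA \<subseteq> A" by (rule span_minimal[OF BA(1) assms(2)])
  then have "x \<notin> span BA" using x(2) by blast
  then have "independent (insert x BA)" using BA(2) by (rule independent_insertI)
  moreover have "insert x BA \<subseteq> span B" using x(1) BA(1) assms(3) span_superset by blast
  ultimately have "finite (insert x BA) \<and> card (insert x BA) \<le> dim B"
    by (rule independent_card_le_dim[OF assms(1)])
  moreover have "x \<notin> BA" using x(2) BA(1) by blast
  ultimately show False using BA(4) assms(4) by (auto simp: card_insert_if)
qed

lemma dim_Un_direct: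
  assumes "finite_dim (A \<union> B)" "subspace A" "subspace B" "A \<inter> B \<subseteq> {0}"
  shows "dim (A \<union> B) = dim A + dim B"
proof -
  obtain BA where BA: "BA \<subseteq> A" "independent BA" "A \<subseteq> span BA" "card BA = dim A"
    by (rule basis_exists)
  obtain BB where BB: "BB \<subseteq> B" "independent BB" "B \<subseteq> span BB" "card BB = dim B"
    by (rule basis_exists)
  have "BA \<subseteq> span (A \<union> B)" "BB \<subseteq> span (A \<union> B)"
    using BA(1) BB(1) span_superset by blast+
  then have fin: "finite BA" "finite BB"
    using independent_card_le_dim[OF assms(1) BA(2)] independent_card_le_dim[OF assms(1) BB(2)]
    by blast+
  have spA: "span BA = A" and spB: "span BB = B"
    using BA BB assms(2,3) by (simp_all add: span_subspace)
  have "0 \<notin> BA" using BA(2) dependent_zero by blast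
  then have disj: "BA \<inter> BB = {}" using BA(1) BB(1) assms(4) by blast
  have "independent (BA \<union> BB)"
  proof (rule independent_if_scalars_zero)
    show "finite (BA \<union> BB)" using fin by simp
    fix f x assume sum0: "(\<Sum>x\<in>BA \<union> BB. f x *s x) = 0" and x: "x \<in> BA \<union> BB"
    let ?a = "\<Sum>x\<in>BA. f x *s x" and ?b = "\<Sum>x\<in>BB. f x *s x"
    have ab: "?a + ?b = 0" using sum0 fin disj by (simp add: sum.union_disjoint)
    have "?a \<in> span BA" "?b \<in> span BB" by (intro span_sum span_scale span_base; assumption)+
    then have "?a \<in> A" "- ?b \<in> B" using spA spB assms(3) subspace_neg by auto
    moreover have "?a = - ?b" using ab by (simp add: eq_neg_iff_add_eq_0)
    ultimately have "?a = 0" "?b = 0" using assms(4) ab by auto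
    then show "f x = 0"
      using x independentD[OF BA(2) fin(1) order_refl] independentD[OF BB(2) fin(2) order_refl]
      by blast
  qed
  moreover have "BA \<union> BB \<subseteq> A \<union> B" using BA(1) BB(1) by blast
  moreover have "A \<union> B \<subseteq> span (BA \<union> BB)"
    using BA(3) BB(3) span_mono[of BA "BA \<union> BB"] span_mono[of BB "BA \<union> BB"] by blast
  ultimately have "card (BA \<union> BB) = dim (A \<union> B)" by (intro basis_card_eq_dim)
  then show ?thesis using fin disj BA(4) BB(4) by (simp add: card_Un_disjoint)
qed

lemma dim_image_eq_if_inj:
  assumes "module_hom scale scale f" "inj_on f A" "subspace A"
  shows "dim (f ` A) = dim A"
proof -
  interpret f: module_hom scale scale f by fact
  obtain BA where BA: "BA \<subseteq> A" "independent BA" "A \<subseteq> span BA" "card BA = dim A"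
    by (rule basis_exists)
  have spA: "span BA = A" using BA assms(3) by (simp add: span_subspace)
  have "card (f ` BA) = dim (f ` A)"
  proof (rule basis_card_eq_dim)
    show "f ` BA \<subseteq> f ` A" using BA by blast
    show "f ` A \<subseteq> span (f ` BA)" using f.span_image[of BA] spA by simp
    show "independent (f ` BA)" using f.independent_injective_image[OF BA(2)] assms(2) spA by simp
  qed
  moreover have "card (f ` BA) = card BA"
    using assms(2) BA(1) by (simp add: card_image inj_on_subset)
  ultimately show ?thesis using BA(4) by simp
qed

lemma span_Int_span_eq_0:
  assumes "finite S" "finite T" "independent (S \<union> T)" "S \<inter> T = {}"
    and "x \<in> span S" "x \<in> span T"
  shows "x = 0"
proof -
  obtain a where a: "x = (\<Sum>v\<in>S. a v *s v)" using assms(5) span_finite[OF assms(1)] by auto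
  obtain b where b: "x = (\<Sum>v\<in>T. b v *s v)" using assms(6) span_finite[OF assms(2)] by auto
  define c where "c v = (if v \<in> S then a v else - b v)" for v
  have "(\<Sum>v\<in>S \<union> T. c v *s v) = (\<Sum>v\<in>S. c v *s v) + (\<Sum>v\<in>T. c v *s v)"
    using assms(1,2,4) by (simp add: sum.union_disjoint)
  also have "(\<Sum>v\<in>S. c v *s v) = x" using a by (simp add: c_def)
  also have "(\<Sum>v\<in>T. c v *s v) = - x" using b assms(4)
    by (auto simp: c_def sum_negf[symmetric] intro!: sum.cong)
  finally have "(\<Sum>v\<in>S \<union> T. c v *s v) = 0" by simp
  then have "\<forall>v\<in>S. c v = 0" using independentD[OF assms(3)] assms(1,2) by blast
  then show ?thesis using a by (simp add: c_def)
qed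

lemma dim_eq_dim_kernel_add_dim_image:
  assumes "module_hom scale scale P" "subspace A" "finite_dim A"
    and "P ` A \<subseteq> A" "\<And>x. x \<in> A \<Longrightarrow> P (P x) = P x"
  shows "dim A = dim {x \<in> A. P x = 0} + dim (P ` A)"
proof -
  interpret P: module_hom scale scale P by fact
  let ?K = "{x \<in> A. P x = 0}"
  have "?K = A \<inter> {x. P x = 0}" by blast
  then have K: "subspace ?K" using assms(2) P.subspace_kernel by (simp add: subspace_inter)
  have KA: "?K \<union> P ` A \<subseteq> A" using assms(4) by blast
  have "dim (?K \<union> P ` A) = dim ?K + dim (P ` A)"
  proof (rule dim_Un_direct[OF _ K P.subspace_image[OF assms(2)]])
    show "finite_dim (?K \<union> P ` A)"
      using finite_dim_subset[OF assms(3)] KA span_superset by blast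
    show "?K \<inter> P ` A \<subseteq> {0}" using assms(5) by auto
  qed
  moreover have "span (?K \<union> P ` A) = A"
  proof (rule span_subspace[OF KA _ assms(2)])
    show "A \<subseteq> span (?K \<union> P ` A)"
    proof
      fix x assume x: "x \<in> A"
      then have Px: "P x \<in> A" using assms(4) by blast
      have "x - P x \<in> ?K" using x Px assms(2,5) by (simp add: P.diff subspace_diff)
      then have "x - P x \<in> span (?K \<union> P ` A)" by (simp add: span_base)
      moreover have "P x \<in> span (?K \<union> P ` A)" using x by (simp add: span_base)
      ultimately have "(x - P x) + P x \<in> span (?K \<union> P ` A)" by (rule span_add)
      then show "x \<in> span (?K \<union> P ` A)" by simp
    qed
  qed
  ultimately show ?thesis by (metis dim_span)
qed

end

subsection \<open>Counting monomials\<close>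

definition monoms_in :: "nat set \<Rightarrow> nat \<Rightarrow> (nat \<Rightarrow>\<^sub>0 nat) set" where
  "monoms_in Q m = {mon. keys mon \<subseteq> Q \<and> mon_deg mon = m}"

lemma monoms_in_empty: "monoms_in {} m = (if m = 0 then {0} else {})"
  by (auto simp: monoms_in_def mon_deg_eq_0_iff)

lemma monoms_in_insert:
  assumes "a \<notin> Q"
  shows "monoms_in (insert a Q) m = (\<Union>j\<le>m. (\<lambda>mon. mon + single a j) ` monoms_in Q (m - j))"
proof (intro equalityI subsetI)
  fix mon assume mon: "mon \<in> monoms_in (insert a Q) m"
  define j where "j = lookup mon a"
  define mon' where "mon' = mon - single a j"
  have eq: "mon = mon' + single a j"
    by (rule poly_mapping_eqI) (simp add: mon'_def lookup_add lookup_minus lookup_single_if j_def)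
  have "keys mon' \<subseteq> Q"
  proof
    fix i assume i: "i \<in> keys mon'"
    then have "i \<noteq> a"
      by (auto simp: mon'_def in_keys_iff lookup_minus lookup_single_if j_def split: if_splits)
    moreover have "i \<in> keys mon"
      using i by (simp add: mon'_def in_keys_iff lookup_minus lookup_single_if split: if_splits)
    ultimately show "i \<in> Q" using mon by (auto simp: monoms_in_def)
  qed
  moreover have "j \<le> m" using lookup_le_mon_deg[of mon a] mon by (simp add: monoms_in_def j_def)
  moreover have "mon_deg mon' = m - j"
    using mon unfolding eq by (auto simp: monoms_in_def mon_deg_add)
  ultimately show "mon \<in> (\<Union>j\<le>m. (\<lambda>mon. mon + single a j) ` monoms_in Q (m - j))"
    using eq by (auto simp: monoms_in_def)
next
  fix mon assume "mon \<in> (\<Union>j\<le>m. (\<lambda>mon. mon + single a j) ` monoms_in Q (m - j))"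
  then obtain j mon' where j: "j \<le> m" "mon' \<in> monoms_in Q (m - j)" "mon = mon' + single a j"
    by auto
  then show "mon \<in> monoms_in (insert a Q) m"
    using keys_add[of mon' "single a j"] by (auto simp: monoms_in_def mon_deg_add split: if_splits)
qed

lemma finite_monoms_in: "finite Q \<Longrightarrow> finite (monoms_in Q m)"
  by (induction Q arbitrary: m rule: finite_induct) (simp_all add: monoms_in_empty monoms_in_insert)

lemma sum_choose_pred: "(\<Sum>i\<le>m. (k + i - 1) choose i) = (k + m) choose m"
proof (cases "k = 0")
  case True
  then have "(\<Sum>i\<le>m. (k + i - 1) choose i) = (\<Sum>i\<le>m. if i = 0 then 1 else 0)"
    by (intro sum.cong refl) auto
  then show ?thesis using True by simp
next
  case False
  then have "(\<Sum>i\<le>m. (k + i - 1) choose i) = (\<Sum>i\<le>m. ((k - 1) + i) choose i)"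
    by (intro sum.cong refl) auto
  also have "\<dots> = Suc (k - 1 + m) choose m" by (rule sum_choose_lower)
  finally show ?thesis using False by simp
qed

lemma card_monoms_in: "finite Q \<Longrightarrow> card (monoms_in Q m) = (card Q + m - 1) choose m"
proof (induction Q arbitrary: m rule: finite_induct)
  case (insert a Q)
  let ?A = "\<lambda>j. (\<lambda>mon. mon + single a j) ` monoms_in Q (m - j)"
  have lookup_a: "lookup (mon + single a j) a = j" if "mon \<in> monoms_in Q l" for mon j l
    using that insert(2) by (auto simp: monoms_in_def lookup_add in_keys_iff)
  have "card (monoms_in (insert a Q) m) = card (\<Union>j\<le>m. ?A j)"
    using insert by (simp add: monoms_in_insert)
  also have "\<dots> = (\<Sum>j\<le>m. card (?A j))"
  proof (rule card_UN_disjoint)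
    show "\<forall>j\<in>{..m}. finite (?A j)" using insert finite_monoms_in by blast
    show "\<forall>i\<in>{..m}. \<forall>j\<in>{..m}. i \<noteq> j \<longrightarrow> ?A i \<inter> ?A j = {}"
    proof (intro ballI impI equals0I)
      fix i j x assume "i \<noteq> j" "x \<in> ?A i \<inter> ?A j"
      then obtain y z where "y \<in> monoms_in Q (m - i)" "z \<in> monoms_in Q (m - j)"
        "x = y + single a i" "x = z + single a j"
        by blast
      then show False using lookup_a \<open>i \<noteq> j\<close> by metis
    qed
  qed simp
  also have "\<dots> = (\<Sum>j\<le>m. card (monoms_in Q (m - j)))"
    by (intro sum.cong refl card_image) (simp add: inj_on_def)
  also have "\<dots> = (\<Sum>j\<le>m. (card Q + (m - j) - 1) choose (m - j))"
    using insert by simp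
  also have "\<dots> = (\<Sum>i\<le>m. (card Q + i - 1) choose i)"
    by (rule sum.reindex_bij_witness[of _ "\<lambda>i. m - i" "\<lambda>i. m - i"]) auto
  also have "\<dots> = (card Q + m) choose m"
    by (rule sum_choose_pred)
  also have "\<dots> = (card (insert a Q) + m - 1) choose m"
    using insert by simp
  finally show ?case .
qed (simp add: monoms_in_empty)

lemma independent_monomials: "V.independent ((\<lambda>mon. single mon (1::'a::field)) ` M)"
  unfolding V.independent_explicit_module
proof (intro allI impI)
  fix t u v
  assume t: "finite t" "t \<subseteq> (\<lambda>mon. single mon (1::'a)) ` M"
    and sum: "(\<Sum>v\<in>t. msmult (u v) v) = 0" and v: "v \<in> t"
  obtain mon where mon: "v = single mon 1" using v t by auto
  have "0 = lookup (\<Sum>w\<in>t. msmult (u w) w) mon" using sum by simp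
  also have "\<dots> = (\<Sum>w\<in>t. if w = v then u w else 0)"
  proof (unfold lookup_sum, intro sum.cong refl)
    fix w assume "w \<in> t"
    then obtain mw where "w = single mw 1" using t by auto
    then show "lookup (msmult (u w) w) mon = (if w = v then u w else 0)"
      using mon by (auto simp: lookup_single_if)
  qed
  also have "\<dots> = u v" using t v by simp
  finally show "u v = 0" by simp
qed

lemma forms_in_subset_span_monomials:
  "forms_in Q m \<subseteq> V.span ((\<lambda>mon. single mon (1::'a::field)) ` monoms_in Q m)"
proof
  fix p :: "'a mpoly" assume p: "p \<in> forms_in Q m"
  have "p = (\<Sum>mon\<in>keys p. msmult (lookup p mon) (single mon 1))" by (rule mpoly_eq_sum_msmult)
  also have "\<dots> \<in> V.span ((\<lambda>mon. single mon (1::'a)) ` monoms_in Q m)"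
    using p by (intro V.span_sum V.span_scale V.span_base)
      (auto simp: forms_in_def polys_in_def homog_of_deg_def monoms_in_def)
  finally show "p \<in> V.span ((\<lambda>mon. single mon (1::'a)) ` monoms_in Q m)" .
qed

lemma dim_forms_in:
  assumes "finite Q"
  shows "V.dim (forms_in Q m :: ('a::field) mpoly set) = (card Q + m - 1) choose m"
proof -
  have "card ((\<lambda>mon. single mon (1::'a)) ` monoms_in Q m) = V.dim (forms_in Q m :: 'a mpoly set)"
    by (rule V.basis_card_eq_dim[OF _ forms_in_subset_span_monomials independent_monomials])
       (auto simp: monoms_in_def forms_in_def polys_in_single homog_of_deg_single)
  moreover have "card ((\<lambda>mon. single mon (1::'a)) ` monoms_in Q m) = card (monoms_in Q m)"
    by (rule card_image) (simp add: inj_on_def)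
  ultimately show ?thesis using card_monoms_in[OF assms] by simp
qed

lemma finite_dim_forms_in: "finite Q \<Longrightarrow> V.finite_dim (forms_in Q m :: ('a::field) mpoly set)"
  unfolding V.finite_dim_def
  by (intro exI[of _ "(\<lambda>mon. single mon 1) ` monoms_in Q m"])
     (simp add: finite_monoms_in forms_in_subset_span_monomials)

lemma subspace_graded_part: "V.subspace (graded_part n m :: ('a::field) mpoly set)"
  unfolding graded_part_eq_forms_in by (rule subspace_forms_in)

lemma finite_dim_graded_part: "V.finite_dim (graded_part n m :: ('a::field) mpoly set)"
  unfolding graded_part_eq_forms_in by (simp add: finite_dim_forms_in)

lemma finite_dim_Int_graded_part: "V.finite_dim (A \<inter> graded_part n m :: ('a::field) mpoly set)"
  using V.finite_dim_subset[OF finite_dim_graded_part] V.span_superset by blast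

lemma dim_Int_graded_part_le:
  "V.dim ((I :: ('a::field) mpoly set) \<inter> graded_part n m) \<le> V.dim (graded_part n m :: 'a mpoly set)"
  using V.dim_le_if_subset_span[OF finite_dim_graded_part] V.span_superset by blast

lemma dim_Int_graded_part_add_hilbert_fun:
  "V.dim ((I :: ('a::field) mpoly set) \<inter> graded_part n m) + hilbert_fun n I m
     = V.dim (graded_part n m :: 'a mpoly set)"
  using dim_Int_graded_part_le[of I n m] by (simp add: hilbert_fun_def)

lemma graded_part_1_subset_span_mvars:
  "graded_part n 1 \<subseteq> V.span (mvar ` {..n} :: ('a::field) mpoly set)"
proof -
  have "(\<lambda>mon. single mon (1::'a)) ` monoms_in {..n} 1 \<subseteq> mvar ` {..n}"
  proof
    fix x assume "x \<in> (\<lambda>mon. single mon (1::'a)) ` monoms_in {..n} 1"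
    then obtain mon where mon: "x = single mon 1" "keys mon \<subseteq> {..n}" "mon_deg mon = 1"
      by (auto simp: monoms_in_def)
    then obtain i where "mon = single i 1" using mon_deg_eq_1D by blast
    then show "x \<in> mvar ` {..n}" using mon by (auto simp: mvar_def)
  qed
  then show ?thesis
    using forms_in_subset_span_monomials[of "{..n}" 1] V.span_mono
    unfolding graded_part_eq_forms_in by blast
qed

lemma inj_mvar: "inj (mvar :: nat \<Rightarrow> ('a::field) mpoly)"
proof (rule injI)
  fix i j assume "(mvar i :: 'a mpoly) = mvar j"
  then have "lookup (single i (1::nat)) i = lookup (single j 1) i" by (simp add: mvar_def)
  then show "i = j" by (simp add: lookup_single_if split: if_splits)
qed

lemma dim_graded_part_1: "V.dim (graded_part n 1 :: ('a::field) mpoly set) = n + 1"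
  unfolding graded_part_eq_forms_in by (simp add: dim_forms_in)

lemma lin_indep_linear_formsD:
  assumes "lin_indep_linear_forms n r (u :: nat \<Rightarrow> ('a::field) mpoly)"
  shows "inj_on u {..<r}" "V.independent (u ` {..<r})" "u ` {..<r} \<subseteq> graded_part n 1"
proof -
  have zero: "\<And>c. (\<Sum>i<r. msmult (c i) (u i)) = 0 \<Longrightarrow> (\<forall>i<r. c i = 0)"
    using assms by (simp add: lin_indep_linear_forms_def)
  show "u ` {..<r} \<subseteq> graded_part n 1" using assms by (auto simp: lin_indep_linear_forms_def)
  show inj: "inj_on u {..<r}"
  proof (rule inj_onI, rule ccontr)
    fix i j assume ij: "i \<in> {..<r}" "j \<in> {..<r}" "u i = u j" "i \<noteq> j"
    define c where "c k = (if k = i then (1::'a) else if k = j then -1 else 0)" for k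
    have "(\<Sum>k<r. msmult (c k) (u k)) = (\<Sum>k\<in>{i, j}. msmult (c k) (u k))"
      by (rule sum.mono_neutral_right) (use ij in \<open>auto simp: c_def\<close>)
    also have "\<dots> = 0" using ij by (simp add: c_def V.scale_left_diff_distrib[symmetric])
    finally have "c i = 0" using zero ij by blast
    then show False by (simp add: c_def)
  qed
  show "V.independent (u ` {..<r})"
  proof (rule V.independent_if_scalars_zero)
    fix f x assume "(\<Sum>x\<in>u ` {..<r}. msmult (f x) x) = 0" and x: "x \<in> u ` {..<r}"
    then have "(\<Sum>i<r. msmult (f (u i)) (u i)) = 0" by (simp add: sum.reindex[OF inj])
    then show "f x = 0" using zero[of "\<lambda>i. f (u i)"] x by auto
  qed simp
qed

lemma lookup_hcomp: "lookup (hcomp m p) mon = (if mon_deg mon = m then lookup p mon else 0)"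
proof -
  have "finite {mon. (if mon_deg mon = m then lookup p mon else 0) \<noteq> 0}"
    by (rule finite_subset[of _ "keys p"]) (auto simp: in_keys_iff)
  then show ?thesis unfolding hcomp_def by simp
qed

lemma hcomp_add: "hcomp m (p + q) = hcomp m p + hcomp m q"
  by (rule poly_mapping_eqI) (simp add: lookup_hcomp lookup_add)

lemma hcomp_sum: "hcomp m (sum f A) = (\<Sum>a\<in>A. hcomp m (f a))"
  by (induction A rule: infinite_finite_induct)
     (auto simp: hcomp_add intro!: poly_mapping_eqI simp: lookup_hcomp)

lemma hcomp_homog_of_deg: "homog_of_deg d q \<Longrightarrow> hcomp m q = (if d = m then q else 0)"
  by (rule poly_mapping_eqI) (auto simp: lookup_hcomp homog_of_deg_def in_keys_iff)

lemma homog_of_deg_hcomp: "homog_of_deg m (hcomp m p)"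
  unfolding homog_of_deg_def by (auto simp: in_keys_iff lookup_hcomp split: if_splits)

lemma hcomp_in_forms_in: "p \<in> polys_in Q \<Longrightarrow> hcomp m p \<in> forms_in Q m"
  using homog_of_deg_hcomp[of m p]
  by (auto simp: forms_in_def polys_in_def in_keys_iff lookup_hcomp split: if_splits)

lemma sum_hcomp:
  assumes "finite D" "mon_deg ` keys p \<subseteq> D"
  shows "(\<Sum>k\<in>D. hcomp k p) = p"
proof (rule poly_mapping_eqI)
  fix mon
  have "lookup (\<Sum>k\<in>D. hcomp k p) mon = (\<Sum>k\<in>D. if mon_deg mon = k then lookup p mon else 0)"
    by (simp add: lookup_sum lookup_hcomp)
  also have "\<dots> = (if mon_deg mon \<in> D then lookup p mon else 0)"
    using assms(1) by (simp add: eq_commute[of "mon_deg mon"])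
  also have "\<dots> = lookup p mon" using assms(2) by (metis image_subset_iff in_keys_iff)
  finally show "lookup (\<Sum>k\<in>D. hcomp k p) mon = lookup p mon" .
qed

lemma hcomp_mult_homog_of_deg:
  assumes g: "homog_of_deg e g"
  shows "hcomp m (g * h) = (if e \<le> m then g * hcomp (m - e) h else (0::('a::comm_ring_1) mpoly))"
proof -
  define D where "D = insert (m - e) (mon_deg ` keys h)"
  have D: "finite D" "m - e \<in> D" by (simp_all add: D_def)
  have "g * h = (\<Sum>k\<in>D. g * hcomp k h)"
    by (subst sum_hcomp[OF D(1), of h, symmetric]) (auto simp: D_def sum_distrib_left)
  then have "hcomp m (g * h) = (\<Sum>k\<in>D. hcomp m (g * hcomp k h))"
    by (simp add: hcomp_sum)
  also have "\<dots> = (\<Sum>k\<in>D. if e + k = m then g * hcomp k h else 0)"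
    by (intro sum.cong refl hcomp_homog_of_deg homog_of_deg_mult[OF g homog_of_deg_hcomp])
  also have "\<dots> = (\<Sum>k\<in>D. if e \<le> m \<and> k = m - e then g * hcomp k h else 0)"
    by (intro sum.cong refl) auto
  also have "\<dots> = (if e \<le> m then g * hcomp (m - e) h else 0)"
    using D by simp
  finally show ?thesis .
qed

definition form_multiples :: "nat set \<Rightarrow> ('a::comm_ring_1) mpoly \<Rightarrow> nat \<Rightarrow> 'a mpoly set" where
  "form_multiples Q g m = {q \<in> forms_in Q m. \<exists>h\<in>polys_in Q. q = g * h}"

lemma form_multiples_eq:
  assumes "g \<in> forms_in Q e"
  shows "form_multiples Q g m = (if e \<le> m then (*) g ` forms_in Q (m - e) else {0})"
proof -
  have g: "homog_of_deg e g" "g \<in> polys_in Q" using assms by (simp_all add: forms_in_def)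
  have "q \<in> (if e \<le> m then (*) g ` forms_in Q (m - e) else {0})"
    if "q \<in> forms_in Q m" "h \<in> polys_in Q" "q = g * h" for q h
  proof -
    have "q = hcomp m (g * h)"
      using that hcomp_homog_of_deg[of m q m] by (simp add: forms_in_def)
    then show ?thesis using hcomp_mult_homog_of_deg[OF g(1)] hcomp_in_forms_in[OF that(2)] by auto
  qed
  moreover have "g * h \<in> form_multiples Q g m" if "e \<le> m" "h \<in> forms_in Q (m - e)" for h
    using forms_in_mult[OF assms that(2)] that by (auto simp: form_multiples_def forms_in_def)
  moreover have "0 \<in> form_multiples Q g m"
    by (auto simp: form_multiples_def intro: bexI[of _ 0])
  ultimately show ?thesis by (auto simp: form_multiples_def)
qed

lemma module_hom_mult_left: "module_hom msmult msmult ((*) (g :: ('a::field) mpoly))"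
  by (simp add: module_hom_iff V.module_axioms distrib_left mult_msmult_right)

lemma dim_form_multiples:
  assumes "g \<in> forms_in Q e" "g \<noteq> 0"
  shows "V.dim (form_multiples Q g m :: ('a::field) mpoly set)
           = (if e \<le> m then V.dim (forms_in Q (m - e) :: 'a mpoly set) else 0)"
proof -
  have "V.dim ((*) g ` forms_in Q (m - e)) = V.dim (forms_in Q (m - e) :: 'a mpoly set)"
    using assms(2) by (intro V.dim_image_eq_if_inj module_hom_mult_left subspace_forms_in) (simp add: inj_on_def)
  moreover have "V.dim {0 :: 'a mpoly} = V.dim ({} :: 'a mpoly set)"
    by (rule V.span_eq_dim) simp
  moreover have "V.dim ({} :: 'a mpoly set) = 0"
    using V.dim_eq_card_independent[OF V.independent_empty] by simp
  ultimately show ?thesis by (simp add: form_multiples_eq[OF assms(1)])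
qed

subsection \<open>Retractions onto a polynomial subring in fewer variables\<close>

definition msubst_kernel :: "nat \<Rightarrow> (nat \<Rightarrow> ('a::field) mpoly) \<Rightarrow> 'a mpoly set" where
  "msubst_kernel n \<tau> = {p \<in> polys n. msubst \<tau> p = 0}"

lemma is_ideal_msubst_kernel: "is_ideal n (msubst_kernel n \<tau>)"
  unfolding is_ideal_def msubst_kernel_def
  by (auto simp: msubst_add msubst_mult polys_eq_polys_in polys_in_add polys_in_mult)

lemma gen_ideal_eq_msubst_kernel:
  assumes "U \<subseteq> polys n" "\<And>x. x \<in> U \<Longrightarrow> msubst \<tau> x = 0"
    and "\<And>i. i \<le> n \<Longrightarrow> \<tau> i \<in> polys n" "\<And>i. i \<le> n \<Longrightarrow> mvar i - \<tau> i \<in> V.span U"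
  shows "gen_ideal n U = msubst_kernel n \<tau>"
proof
  show "gen_ideal n U \<subseteq> msubst_kernel n \<tau>"
  proof (rule gen_ideal_least[OF is_ideal_msubst_kernel])
    show "U \<subseteq> msubst_kernel n \<tau>" using assms(1,2) by (auto simp: msubst_kernel_def)
  qed
next
  have U: "is_ideal n (gen_ideal n U)" by (rule is_ideal_gen_ideal[OF assms(1)])
  have span: "V.span U \<subseteq> gen_ideal n U"
    by (rule V.span_minimal[OF gen_ideal_superset[OF assms(1)] subspace_ideal[OF U]])
  show "msubst_kernel n \<tau> \<subseteq> gen_ideal n U"
  proof
    fix p assume "p \<in> msubst_kernel n \<tau>"
    then have p: "p \<in> polys n" "msubst \<tau> p = 0" by (auto simp: msubst_kernel_def)
    have "p - msubst \<tau> p \<in> gen_ideal n U"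
      by (rule diff_msubst_in_ideal[OF U assms(3) subsetD[OF span assms(4)] p(1)])
    then show "p \<in> gen_ideal n U" using p(2) by simp
  qed
qed

lemma msubst_linear_form:
  assumes "p \<in> graded_part n 1"
  shows "p - msubst \<tau> p \<in> V.span ((\<lambda>i. mvar i - \<tau> i) ` {..n})"
    and "msubst \<tau> p \<in> V.span (\<tau> ` {..n})"
proof -
  have var: "\<exists>i\<le>n. mon = single i 1" if "mon \<in> keys p" for mon
  proof -
    have "mon_deg mon = 1" "keys mon \<subseteq> {..n}"
      using assms that by (auto simp: graded_part_def polys_def homog_of_deg_def)
    then show ?thesis using mon_deg_eq_1D by fastforce
  qed
  have "p - msubst \<tau> p = (\<Sum>mon\<in>keys p. msmult (lookup p mon) (single mon 1 - mon_subst \<tau> mon))"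
    by (subst (1) mpoly_eq_sum_msmult) (simp add: msubst_def V.scale_right_diff_distrib sum_subtractf)
  also have "\<dots> \<in> V.span ((\<lambda>i. mvar i - \<tau> i) ` {..n})"
  proof (intro V.span_sum V.span_scale V.span_base)
    fix mon assume "mon \<in> keys p"
    then obtain i where i: "i \<le> n" "mon = single i 1" using var by blast
    show "single mon 1 - mon_subst \<tau> mon \<in> (\<lambda>i. mvar i - \<tau> i) ` {..n}"
      unfolding mvar_def
      by (rule rev_image_eqI[of i]) (simp_all only: i atMost_iff mon_subst_single_1 order_refl)
  qed
  finally show "p - msubst \<tau> p \<in> V.span ((\<lambda>i. mvar i - \<tau> i) ` {..n})" .
  show "msubst \<tau> p \<in> V.span (\<tau> ` {..n})"
    unfolding msubst_def
  proof (intro V.span_sum V.span_scale V.span_base)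
    fix mon assume "mon \<in> keys p"
    then obtain i where i: "i \<le> n" "mon = single i 1" using var by blast
    show "mon_subst \<tau> mon \<in> \<tau> ` {..n}"
      by (rule rev_image_eqI[of i]) (simp_all only: i atMost_iff mon_subst_single_1 order_refl)
  qed
qed

locale linear_retraction =
  fixes n :: nat and Q :: "nat set" and \<tau> :: "nat \<Rightarrow> ('a::field) mpoly"
  assumes vars_subset: "Q \<subseteq> {..n}"
    and linear_image: "\<And>i. i \<le> n \<Longrightarrow> \<tau> i \<in> forms_in Q 1"
    and fixes_vars: "\<And>i. i \<in> Q \<Longrightarrow> \<tau> i = mvar i"
begin

lemma polys_in_subset_polys: "polys_in Q \<subseteq> polys n"
  unfolding polys_eq_polys_in by (rule polys_in_mono[OF vars_subset])

lemma forms_in_subset_graded_part: "forms_in Q m \<subseteq> graded_part n m"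
  using polys_in_subset_polys by (auto simp: graded_part_def forms_in_def)

lemma msubst_graded_part: "p \<in> graded_part n m \<Longrightarrow> msubst \<tau> p \<in> forms_in Q m"
  unfolding graded_part_eq_forms_in by (rule msubst_in_forms_in[OF linear_image]) auto

lemma msubst_polys: "p \<in> polys n \<Longrightarrow> msubst \<tau> p \<in> polys_in Q"
  unfolding polys_eq_polys_in
  by (rule msubst_in_polys_in) (use linear_image in \<open>auto simp: forms_in_def\<close>)

lemma msubst_fixes: "p \<in> polys_in Q \<Longrightarrow> msubst \<tau> p = p"
  by (rule msubst_fixes_polys_in[OF fixes_vars])

lemma msubst_idem: "p \<in> polys n \<Longrightarrow> msubst \<tau> (msubst \<tau> p) = msubst \<tau> p"
  by (rule msubst_fixes[OF msubst_polys])

lemma diff_msubst_in_kernel: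
  assumes "p \<in> polys n"
  shows "p - msubst \<tau> p \<in> msubst_kernel n \<tau>"
proof -
  have "msubst \<tau> p \<in> polys n" using msubst_polys[OF assms] polys_in_subset_polys by blast
  then have "p - msubst \<tau> p \<in> polys n" using assms by (simp add: polys_eq_polys_in polys_in_diff)
  moreover have "msubst \<tau> (p - msubst \<tau> p) = 0" using assms by (simp add: msubst_diff msubst_idem)
  ultimately show ?thesis by (simp add: msubst_kernel_def)
qed

lemma dim_graded_part:
  "V.dim (graded_part n m :: 'a mpoly set)
     = V.dim (msubst_kernel n \<tau> \<inter> graded_part n m) + V.dim (forms_in Q m :: 'a mpoly set)"
proof -
  have "msubst \<tau> ` graded_part n m = forms_in Q m"
  proof
    show "msubst \<tau> ` graded_part n m \<subseteq> forms_in Q m" using msubst_graded_part by blast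
    show "forms_in Q m \<subseteq> msubst \<tau> ` graded_part n m"
    proof
      fix q :: "'a mpoly" assume q: "q \<in> forms_in Q m"
      then have "msubst \<tau> q = q" by (simp add: forms_in_def msubst_fixes)
      then show "q \<in> msubst \<tau> ` graded_part n m"
        using q forms_in_subset_graded_part by (metis image_eqI subsetD)
    qed
  qed
  moreover have "{p \<in> graded_part n m. msubst \<tau> p = 0} = msubst_kernel n \<tau> \<inter> graded_part n m"
    by (auto simp: msubst_kernel_def graded_part_def)
  moreover have "V.dim (graded_part n m :: 'a mpoly set) = V.dim {p \<in> graded_part n m. msubst \<tau> p = 0} + V.dim (msubst \<tau> ` graded_part n m)"
  proof (rule V.dim_eq_dim_kernel_add_dim_image[OF module_hom_msubst subspace_graded_part finite_dim_graded_part])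
    show "msubst \<tau> ` graded_part n m \<subseteq> graded_part n m"
      using msubst_graded_part forms_in_subset_graded_part by blast
    show "msubst \<tau> (msubst \<tau> p) = msubst \<tau> p" if "p \<in> graded_part n m" for p
      using that msubst_idem by (simp add: graded_part_def)
  qed
  ultimately show ?thesis by (simp only:)
qed

end

lemma dim_forms_in_eq_choose:
  assumes "finite Q" "card Q = d + 2"
  shows "V.dim (forms_in Q m :: ('a::field) mpoly set) = (m + d + 1) choose (d + 1)"
  using assms binomial_symmetric[of m "m + d + 1"] by (simp add: dim_forms_in algebra_simps)

text \<open>The Hilbert function of a hypersurface of degree \<open>e\<close> in \<open>\<bbbP>\<^sup>d\<^sup>+\<^sup>1\<close>.\<close>

definition hilbert_hypersurface :: "nat \<Rightarrow> nat \<Rightarrow> nat \<Rightarrow> nat" where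
  "hilbert_hypersurface d e m =
     ((m + d + 1) choose (d + 1)) - (if e \<le> m then (m - e + d + 1) choose (d + 1) else 0)"

context linear_retraction
begin

lemma is_ideal_msubst_multiples:
  "is_ideal n {p \<in> polys n. \<exists>h\<in>polys_in Q. msubst \<tau> p = g * h}" (is "is_ideal n ?K")
  unfolding is_ideal_def
proof (intro conjI ballI)
  show "0 \<in> ?K" by (auto simp: polys_eq_polys_in intro: bexI[of _ 0])
  show "p + q \<in> ?K" if pq: "p \<in> ?K" "q \<in> ?K" for p q
  proof -
    obtain h1 h2 where "h1 \<in> polys_in Q" "h2 \<in> polys_in Q" "msubst \<tau> p = g * h1" "msubst \<tau> q = g * h2"
      using pq by blast
    then show ?thesis
      using pq by (auto simp: msubst_add polys_eq_polys_in polys_in_add distrib_left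
          intro!: bexI[of _ "h1 + h2"])
  qed
  show "p * q \<in> ?K" if "p \<in> polys n" "q \<in> ?K" for p q
    using that msubst_polys[OF that(1)]
    by (auto simp: msubst_mult polys_eq_polys_in polys_in_mult mult.left_commute)
qed blast

lemma gen_ideal_insert_eq:
  assumes U: "U \<subseteq> polys n" "gen_ideal n U = msubst_kernel n \<tau>" and f: "f \<in> polys n"
  shows "gen_ideal n (insert f U) = {p \<in> polys n. \<exists>h\<in>polys_in Q. msubst \<tau> p = msubst \<tau> f * h}"
    (is "?K = ?K'")
proof
  have "is_ideal n ?K'" by (rule is_ideal_msubst_multiples)
  moreover have "insert f U \<subseteq> ?K'"
  proof -
    have "f \<in> ?K'" using f by (auto intro!: bexI[of _ 1])
    moreover have "x \<in> ?K'" if "x \<in> U" for x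
    proof -
      have "x \<in> polys n" "msubst \<tau> x = 0"
        using that U gen_ideal_superset[OF U(1)] by (auto simp: msubst_kernel_def)
      then show ?thesis by (auto intro!: bexI[of _ 0])
    qed
    ultimately show ?thesis by blast
  qed
  ultimately show "?K \<subseteq> ?K'" by (rule gen_ideal_least)
next
  have fU: "insert f U \<subseteq> polys n" using U f by blast
  have K: "is_ideal n ?K" by (rule is_ideal_gen_ideal[OF fU])
  have JK: "msubst_kernel n \<tau> \<subseteq> ?K"
    unfolding U(2)[symmetric] by (rule gen_ideal_least[OF K]) (use gen_ideal_superset[OF fU] in blast)
  have "f - (f - msubst \<tau> f) \<in> ?K"
    using gen_ideal_superset[OF fU] JK diff_msubst_in_kernel[OF f] by (blast intro: ideal_diff[OF K])
  then have gK: "msubst \<tau> f \<in> ?K" by simp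
  show "?K' \<subseteq> ?K"
  proof clarify
    fix p h assume p: "p \<in> polys n" "h \<in> polys_in Q" "msubst \<tau> p = msubst \<tau> f * h"
    have "p = (p - msubst \<tau> p) + h * msubst \<tau> f" using p(3) by (simp add: mult.commute)
    also have "\<dots> \<in> ?K"
      using JK diff_msubst_in_kernel[OF p(1)] ideal_mult[OF K _ gK, of h] p(2) polys_in_subset_polys
      by (intro ideal_add[OF K]) auto
    finally show "p \<in> ?K" .
  qed
qed

lemma msubst_image_insert:
  assumes U: "U \<subseteq> polys n" "gen_ideal n U = msubst_kernel n \<tau>" and f: "f \<in> graded_part n e"
  shows "msubst \<tau> ` (gen_ideal n (insert f U) \<inter> graded_part n m) = form_multiples Q (msubst \<tau> f) m"
proof -
  have fp: "f \<in> polys n" using f by (simp add: graded_part_def)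
  note K = gen_ideal_insert_eq[OF U fp]
  show ?thesis
  proof
    show "msubst \<tau> ` (gen_ideal n (insert f U) \<inter> graded_part n m) \<subseteq> form_multiples Q (msubst \<tau> f) m"
      using msubst_graded_part by (auto simp: K form_multiples_def)
    show "form_multiples Q (msubst \<tau> f) m \<subseteq> msubst \<tau> ` (gen_ideal n (insert f U) \<inter> graded_part n m)"
    proof
      fix q assume q: "q \<in> form_multiples Q (msubst \<tau> f) m"
      then have "q \<in> forms_in Q m" "msubst \<tau> q = q" by (auto simp: form_multiples_def forms_in_def msubst_fixes)
      then show "q \<in> msubst \<tau> ` (gen_ideal n (insert f U) \<inter> graded_part n m)"
        using q forms_in_subset_graded_part[of m] polys_in_subset_polys
        by (auto simp: K form_multiples_def graded_part_def intro!: rev_image_eqI[of q])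
    qed
  qed
qed

lemma dim_graded_part_insert:
  assumes U: "U \<subseteq> polys n" "gen_ideal n U = msubst_kernel n \<tau>"
    and f: "f \<in> graded_part n e" "f \<notin> msubst_kernel n \<tau>"
  shows "V.dim (gen_ideal n (insert f U) \<inter> graded_part n m)
           = V.dim (msubst_kernel n \<tau> \<inter> graded_part n m)
             + (if e \<le> m then V.dim (forms_in Q (m - e) :: 'a mpoly set) else 0)"
proof -
  let ?K = "gen_ideal n (insert f U)"
  have fU: "insert f U \<subseteq> polys n" using U(1) f(1) by (auto simp: graded_part_def)
  have K: "is_ideal n ?K" by (rule is_ideal_gen_ideal[OF fU])
  have JK: "msubst_kernel n \<tau> \<subseteq> ?K"
    unfolding U(2)[symmetric] by (rule gen_ideal_least[OF K]) (use gen_ideal_superset[OF fU] in blast)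
  have closed: "msubst \<tau> p \<in> ?K" if p: "p \<in> ?K" for p
  proof -
    have "p - msubst \<tau> p \<in> ?K"
      using JK diff_msubst_in_kernel[OF subsetD[OF ideal_subset_polys[OF K] p]] by blast
    then have "p - (p - msubst \<tau> p) \<in> ?K" by (rule ideal_diff[OF K p])
    then show ?thesis by simp
  qed
  have "V.dim (?K \<inter> graded_part n m)
      = V.dim {p \<in> ?K \<inter> graded_part n m. msubst \<tau> p = 0} + V.dim (msubst \<tau> ` (?K \<inter> graded_part n m))"
  proof (rule V.dim_eq_dim_kernel_add_dim_image[OF module_hom_msubst _ finite_dim_Int_graded_part])
    show "V.subspace (?K \<inter> graded_part n m)"
      by (rule V.subspace_inter[OF subspace_ideal[OF K] subspace_graded_part])
    show "msubst \<tau> ` (?K \<inter> graded_part n m) \<subseteq> ?K \<inter> graded_part n m"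
      using closed msubst_graded_part forms_in_subset_graded_part by blast
    show "msubst \<tau> (msubst \<tau> p) = msubst \<tau> p" if "p \<in> ?K \<inter> graded_part n m" for p
      using that msubst_idem by (simp add: graded_part_def)
  qed
  moreover have "{p \<in> ?K \<inter> graded_part n m. msubst \<tau> p = 0} = msubst_kernel n \<tau> \<inter> graded_part n m"
    using JK by (auto simp: msubst_kernel_def graded_part_def)
  moreover have "msubst \<tau> f \<in> forms_in Q e" "msubst \<tau> f \<noteq> 0"
    using f msubst_graded_part by (auto simp: msubst_kernel_def graded_part_def)
  then have "V.dim (msubst \<tau> ` (?K \<inter> graded_part n m))
      = (if e \<le> m then V.dim (forms_in Q (m - e) :: 'a mpoly set) else 0)"
    unfolding msubst_image_insert[OF U f(1)] by (rule dim_form_multiples)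
  ultimately show ?thesis by (simp only:)
qed

lemma hilbert_fun_insert:
  assumes U: "U \<subseteq> polys n" "gen_ideal n U = msubst_kernel n \<tau>"
    and f: "f \<in> graded_part n e" "f \<notin> msubst_kernel n \<tau>" and Q: "card Q = d + 2"
  shows "hilbert_fun n (gen_ideal n (insert f U)) m = hilbert_hypersurface d e m"
proof -
  have "finite Q" using vars_subset finite_subset by blast
  then show ?thesis
    using dim_graded_part[of m] dim_graded_part_insert[OF U f, of m]
    by (simp add: hilbert_fun_def hilbert_hypersurface_def dim_forms_in_eq_choose Q)
qed


lemma graded_part_not_subset_kernel:
  assumes Q: "card Q = d + 2" and h: "hilbert_fun n I e = hilbert_hypersurface d e e"
  shows "\<not> I \<inter> graded_part n e \<subseteq> msubst_kernel n \<tau>"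
proof
  assume "I \<inter> graded_part n e \<subseteq> msubst_kernel n \<tau>"
  then have "V.dim (I \<inter> graded_part n e) \<le> V.dim (msubst_kernel n \<tau> \<inter> graded_part n e)"
    by (intro V.dim_le_if_subset_span finite_dim_Int_graded_part) (auto intro: V.span_base)
  moreover have "hilbert_fun n I e + 1 = V.dim (forms_in Q e :: 'a mpoly set)"
  proof -
    have "hilbert_fun n I e = ((e + d + 1) choose (d + 1)) - 1"
      using h by (simp add: hilbert_hypersurface_def del: binomial_Suc_Suc)
    moreover have "1 \<le> (e + d + 1) choose (d + 1)" by (simp add: Suc_leI del: binomial_Suc_Suc)
    ultimately show ?thesis
      using dim_forms_in_eq_choose[OF finite_subset[OF vars_subset] Q, of e, where 'a = 'a]
      by simp
  qed
  ultimately show False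
    using dim_Int_graded_part_add_hilbert_fun[of I n e] dim_graded_part[of e] by simp
qed

end

lemma linear_forms_complement_mvars:
  fixes u :: "nat \<Rightarrow> ('a::field) mpoly"
  assumes "lin_indep_linear_forms n r u"
  obtains Q where "Q \<subseteq> {..n}" "card Q + r = n + 1"
    "V.independent (u ` {..<r} \<union> mvar ` Q)" "u ` {..<r} \<inter> mvar ` Q = {}"
    "mvar ` {..n} \<subseteq> V.span (u ` {..<r} \<union> mvar ` Q)"
proof -
  define U where "U = u ` {..<r}"
  note U = lin_indep_linear_formsD[OF assms, folded U_def]
  obtain B where B: "U \<subseteq> B" "B \<subseteq> U \<union> mvar ` {..n}" "V.independent B" "U \<union> mvar ` {..n} \<subseteq> V.span B"
    using V.maximal_independent_subset_extend[of U "U \<union> mvar ` {..n}"] U(2) by blast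
  have "B \<subseteq> graded_part n 1" using B(2) U(3) mvar_in_graded_part by blast
  moreover have "graded_part n 1 \<subseteq> V.span B"
    using graded_part_1_subset_span_mvars V.span_minimal[OF _ V.subspace_span, of "mvar ` {..n}" B] B(4)
    by blast
  ultimately have card_B: "card B = n + 1"
    using V.basis_card_eq_dim[OF _ _ B(3)] dim_graded_part_1[of n] by metis
  then have "finite B" by (simp add: card_ge_0_finite)
  define Q where "Q = {i. i \<le> n \<and> mvar i \<in> B - U}"
  have BQ: "B - U = mvar ` Q" using B(2) by (auto simp: Q_def)
  have "card Q + r = n + 1"
  proof -
    have "card (B - U) = card B - card U" using B(1) \<open>finite B\<close> by (simp add: card_Diff_subset finite_subset)
    moreover have "card U \<le> card B" using B(1) \<open>finite B\<close> by (simp add: card_mono)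
    moreover have "card (B - U) = card Q" unfolding BQ by (rule card_image[OF inj_on_subset[OF inj_mvar subset_UNIV]])
    moreover have "card U = r" using U(1) by (simp add: U_def card_image)
    ultimately show ?thesis using card_B by simp
  qed
  moreover have "U \<union> mvar ` Q = B" using B(1) BQ by blast
  moreover have "U \<inter> mvar ` Q = {}" using BQ by blast
  ultimately show thesis
    using that[of Q] B(3,4) by (auto simp: Q_def U_def)
qed

lemma linear_retraction_along_span:
  assumes "Q \<subseteq> {..n}" "mvar ` {..n} \<subseteq> V.span (U \<union> mvar ` Q)"
  obtains \<tau> :: "nat \<Rightarrow> ('a::field) mpoly" where "linear_retraction n Q \<tau>"
    "\<And>i. i \<le> n \<Longrightarrow> \<tau> i \<in> V.span (mvar ` Q)" "\<And>i. i \<le> n \<Longrightarrow> mvar i - \<tau> i \<in> V.span U"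
proof -
  let ?X = "mvar ` Q :: 'a mpoly set"
  have decomp: "\<exists>b. b \<in> V.span ?X \<and> mvar i - b \<in> V.span U" if "i \<le> n" for i
  proof -
    have "mvar i \<in> V.span (U \<union> ?X)" using assms(2) that by blast
    then obtain a b where "mvar i = a + b" "a \<in> V.span U" "b \<in> V.span ?X"
      unfolding V.span_Un by blast
    then show ?thesis by (intro exI[of _ b]) simp
  qed
  define \<tau> where
    "\<tau> i = (if i \<in> Q then mvar i else SOME b. b \<in> V.span ?X \<and> mvar i - b \<in> V.span U)" for i
  have \<tau>: "\<tau> i \<in> V.span ?X \<and> mvar i - \<tau> i \<in> V.span U" if "i \<le> n" for i
  proof (cases "i \<in> Q")
    case True
    then show ?thesis by (simp add: \<tau>_def V.span_base V.span_zero)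
  next
    case False
    then show ?thesis using someI_ex[OF decomp[OF that]] by (simp add: \<tau>_def)
  qed
  have span_forms: "V.span ?X \<subseteq> forms_in Q 1"
    by (rule V.span_minimal[OF _ subspace_forms_in]) (use mvar_in_forms_in in blast)
  have retraction: "linear_retraction n Q \<tau>"
  proof
    show "Q \<subseteq> {..n}" by (rule assms(1))
    show "\<tau> i \<in> forms_in Q 1" if "i \<le> n" for i using \<tau>[OF that] span_forms by blast
    show "\<tau> i = mvar i" if "i \<in> Q" for i using that by (simp add: \<tau>_def)
  qed
  show thesis by (rule that[OF retraction]) (use \<tau> in blast)+
qed

lemma linear_forms_retraction:
  fixes u :: "nat \<Rightarrow> ('a::field) mpoly"
  assumes "lin_indep_linear_forms n r u"
  obtains Q \<tau> where "linear_retraction n Q \<tau>" "card Q + r = n + 1"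
    "gen_ideal n (u ` {..<r}) = msubst_kernel n \<tau>"
proof -
  define U where "U = u ` {..<r}"
  obtain Q where Q: "Q \<subseteq> {..n}" "card Q + r = n + 1" "V.independent (U \<union> mvar ` Q)"
    "U \<inter> mvar ` Q = {}" "mvar ` {..n} \<subseteq> V.span (U \<union> mvar ` Q)"
    using linear_forms_complement_mvars[OF assms] unfolding U_def by blast
  obtain \<tau> :: "nat \<Rightarrow> 'a mpoly" where retraction: "linear_retraction n Q \<tau>"
    and \<tau>: "\<And>i. i \<le> n \<Longrightarrow> \<tau> i \<in> V.span (mvar ` Q)" "\<And>i. i \<le> n \<Longrightarrow> mvar i - \<tau> i \<in> V.span U"
    using linear_retraction_along_span[OF Q(1,5)] by blast
  interpret linear_retraction n Q \<tau> by (rule retraction)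
  have U_linear: "U \<subseteq> graded_part n 1"
    using lin_indep_linear_formsD(3)[OF assms] by (simp add: U_def)
  have span_U: "V.span ((\<lambda>i. mvar i - \<tau> i) ` {..n}) \<subseteq> V.span U"
    by (rule V.span_minimal[OF _ V.subspace_span]) (use \<tau>(2) in blast)
  have span_X: "V.span (\<tau> ` {..n}) \<subseteq> V.span (mvar ` Q)"
    by (rule V.span_minimal[OF _ V.subspace_span]) (use \<tau>(1) in blast)
  have "gen_ideal n U = msubst_kernel n \<tau>"
  proof (rule gen_ideal_eq_msubst_kernel)
    show "U \<subseteq> polys n" using U_linear by (auto simp: graded_part_def)
    show "\<tau> i \<in> polys n" if "i \<le> n" for i
      using linear_image[OF that] forms_in_subset_graded_part by (auto simp: graded_part_def)
    show "mvar i - \<tau> i \<in> V.span U" if "i \<le> n" for i using \<tau>(2)[OF that] .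
    show "msubst \<tau> x = 0" if x: "x \<in> U" for x
    proof (rule V.span_Int_span_eq_0[OF _ _ Q(3,4)])
      have "x - msubst \<tau> x \<in> V.span U"
        using msubst_linear_form(1)[of x n \<tau>] x U_linear span_U by blast
      then have "x - (x - msubst \<tau> x) \<in> V.span U"
        by (rule V.span_diff[OF V.span_base[OF x]])
      then show "msubst \<tau> x \<in> V.span U" by simp
      show "msubst \<tau> x \<in> V.span (mvar ` Q)"
        using msubst_linear_form(2)[of x n \<tau>] x U_linear span_X by blast
    qed (use Q(1) finite_subset in \<open>auto simp: U_def\<close>)
  qed
  then show thesis using that retraction Q(2) by (simp add: U_def)
qed

subsection \<open>Hilbert polynomials\<close>

definition gbinomial_poly :: "rat \<Rightarrow> nat \<Rightarrow> rat poly" where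
  "gbinomial_poly c k = smult (1 / fact k) (\<Prod>i<k. [:c - of_nat i, 1:])"

lemma poly_gbinomial_poly: "poly (gbinomial_poly c k) x = (x + c) gchoose k"
  by (simp add: gbinomial_poly_def gbinomial_prod_rev poly_prod atLeast0LessThan algebra_simps)

lemma mult_monic_linear: "(p :: 'a::comm_ring_1 poly) * [:a, 1:] = smult a p + pCons 0 p"
  by simp

lemma coeff_prod_monic_linear_above: "k < j \<Longrightarrow> coeff (\<Prod>i<k. [:a i, 1:]) j = 0"
proof (induction k arbitrary: j)
  case (Suc k)
  then obtain j' where "j = Suc j'" "k < j'" by (cases j) auto
  then show ?case using Suc.IH[of j] Suc.IH[of j'] Suc.prems
    by (simp add: mult_monic_linear)
qed simp

lemma coeff_prod_monic_linear_top: "coeff (\<Prod>i<k. [:a i, 1:]) k = 1"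
proof (induction k)
  case (Suc k)
  then show ?case
    using coeff_prod_monic_linear_above[where j = "Suc k" and k = k and a = a]
    by (simp add: mult_monic_linear)
qed simp

lemma coeff_prod_monic_linear_subtop:
  "coeff (\<Prod>i<Suc k. [:a i, 1:]) k = (\<Sum>i<Suc k. (a i :: 'a::comm_ring_1))"
proof (induction k)
  case (Suc k)
  have "coeff (\<Prod>i<Suc (Suc k). [:a i, 1:]) (Suc k)
      = a (Suc k) * coeff (\<Prod>i<Suc k. [:a i, 1:]) (Suc k) + coeff (\<Prod>i<Suc k. [:a i, 1:]) k"
    by (simp only: prod.lessThan_Suc[of _ "Suc k"] mult_monic_linear) simp
  also have "\<dots> = a (Suc k) + (\<Sum>i<Suc k. a i)"
    using coeff_prod_monic_linear_top[where k = "Suc k" and a = a] Suc.IH by simp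
  finally show ?case by (simp add: add.commute)
qed simp

lemma coeff_gbinomial_poly_diff:
  "coeff (gbinomial_poly c1 (Suc d) - gbinomial_poly c2 (Suc d)) d = (c1 - c2) / fact d"
proof -
  have "coeff (gbinomial_poly c1 (Suc d) - gbinomial_poly c2 (Suc d)) d
     = (1 / fact (Suc d)) * ((\<Sum>i<Suc d. c1 - of_nat i) - (\<Sum>i<Suc d. c2 - of_nat i))"
    by (simp only: gbinomial_poly_def coeff_diff coeff_smult coeff_prod_monic_linear_subtop
        right_diff_distrib)
  also have "(\<Sum>i<Suc d. c1 - of_nat i) - (\<Sum>i<Suc d. c2 - of_nat i) = (\<Sum>i<Suc d. c1 - c2)"
    by (subst sum_subtractf[symmetric]) simp
  also have "\<dots> = of_nat (Suc d) * (c1 - c2)"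
    by (simp only: sum_constant card_lessThan)
  also have "(1 / fact (Suc d)) * (of_nat (Suc d) * (c1 - c2)) = (c1 - c2) / (fact d :: rat)"
    by (simp only: fact_Suc) (simp add: divide_simps del: of_nat_Suc)
  finally show ?thesis .
qed

lemma hilbert_poly_eqI:
  assumes "\<And>m. m \<ge> M \<Longrightarrow> of_nat (hilbert_fun n I m) = poly P (of_nat m)"
  shows "hilbert_poly n I = P"
  unfolding hilbert_poly_def
proof (rule the_equality)
  show "\<forall>\<^sub>F m in sequentially. of_nat (hilbert_fun n I m) = poly P (of_nat m)"
    using assms by (auto simp: eventually_sequentially)
next
  fix P' :: "rat poly" assume "\<forall>\<^sub>F m in sequentially. of_nat (hilbert_fun n I m) = poly P' (of_nat m)"
  then obtain M' where M': "\<And>m. m \<ge> M' \<Longrightarrow> of_nat (hilbert_fun n I m) = poly P' (of_nat m)"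
    by (auto simp: eventually_sequentially)
  have "of_nat ` {max M M'..} \<subseteq> {x. poly (P' - P) x = 0}"
  proof
    fix y assume "y \<in> (of_nat ` {max M M'..} :: rat set)"
    then obtain x where "x \<ge> max M M'" "y = of_nat x" by auto
    then show "y \<in> {x. poly (P' - P) x = 0}" using assms[of x] M'[of x] by simp
  qed
  moreover have "infinite (of_nat ` {max M M'..} :: rat set)"
  proof
    assume "finite (of_nat ` {max M M'..} :: rat set)"
    then have "finite {max M M'..}" by (rule finite_imageD) (simp add: inj_on_def)
    then show False using infinite_Ici by blast
  qed
  ultimately show "P' = P"
    using poly_roots_finite[of "P' - P"] finite_subset by auto
qed

lemma ideal_degree_eqI:
  assumes "\<And>m. m \<ge> e \<Longrightarrow> hilbert_fun n I m = hilbert_hypersurface d e m"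
  shows "ideal_degree n I d = of_nat e"
proof -
  let ?P = "gbinomial_poly (of_nat d + 1) (Suc d) - gbinomial_poly (of_nat d + 1 - of_nat e) (Suc d)"
  have "hilbert_poly n I = ?P"
  proof (rule hilbert_poly_eqI)
    fix m assume m: "e \<le> m"
    have "(m - e + d + 1) choose (d + 1) \<le> (m + d + 1) choose (d + 1)"
      by (rule binomial_right_mono) simp
    then have "of_nat (hilbert_fun n I m)
        = (of_nat (m + d + 1) gchoose (d + 1)) - (of_nat (m - e + d + 1) gchoose (d + 1) :: rat)"
      using assms[OF m] m
      by (simp add: hilbert_hypersurface_def binomial_gbinomial del: binomial_Suc_Suc)
    also have "\<dots> = poly ?P (of_nat m)"
    proof -
      have "(of_nat (m - e + d + 1) :: rat) = of_nat m + (of_nat d + 1 - of_nat e)"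
        using m by simp
      moreover have "(of_nat (m + d + 1) :: rat) = of_nat m + (of_nat d + 1)" by simp
      ultimately show ?thesis by (simp only: poly_diff poly_gbinomial_poly Suc_eq_plus1)
    qed
    finally show "of_nat (hilbert_fun n I m) = poly ?P (of_nat m)" .
  qed
  then show ?thesis unfolding ideal_degree_def by (simp only: coeff_gbinomial_poly_diff) simp
qed

lemma ibinom_of_nat: "ibinom (of_nat k) j = of_nat (k choose j)"
  unfolding ibinom_def by (simp flip: binomial_gbinomial)

lemma of_nat_hilbert_hypersurface:
  "of_nat (hilbert_hypersurface d e m)
     = ibinom (of_nat (m + d + 1)) (d + 1) - ibinom (of_nat m - of_nat e + of_nat d + 1) (d + 1)"
proof (cases "e \<le> m")
  case True
  have "(m - e + d + 1) choose (d + 1) \<le> (m + d + 1) choose (d + 1)"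
    by (rule binomial_right_mono) simp
  moreover have "(of_nat m - of_nat e + of_nat d + 1 :: rat) = of_nat (m - e + d + 1)"
    using True by simp
  ultimately show ?thesis
    using True by (simp only: hilbert_hypersurface_def ibinom_of_nat if_True of_nat_diff)
next
  case False
  then have "ibinom (of_nat m - of_nat e + of_nat d + 1) (d + 1) = 0" by (simp add: ibinom_def)
  then show ?thesis
    using False by (simp only: hilbert_hypersurface_def ibinom_of_nat if_False diff_zero)
qed

lemma hilbert_fun_eq_hilbert_hypersurface_iff:
  "of_nat (hilbert_fun n I m)
     = ibinom (of_nat (m + d + 1)) (d + 1) - ibinom (of_nat m - of_nat e + of_nat d + 1) (d + 1)
   \<longleftrightarrow> hilbert_fun n I m = hilbert_hypersurface d e m"
  by (simp only: of_nat_hilbert_hypersurface[symmetric] of_nat_eq_iff)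

lemma Ints_if_gbinomial_Ints:
  fixes a :: rat
  assumes "k \<ge> 1" "\<And>m. m \<ge> M \<Longrightarrow> (a + of_nat m) gchoose k \<in> \<int>"
  shows "a \<in> \<int>"
  using assms
proof (induction k rule: nat_induct_at_least)
  case base
  then have "a + of_nat M - of_nat M \<in> \<int>" by (intro Ints_diff) auto
  then show ?case by simp
next
  case (Suc k)
  show ?case
  proof (rule Suc.IH)
    fix m assume m: "m \<ge> M"
    have "(a + of_nat m) gchoose k = ((a + of_nat (Suc m)) gchoose (Suc k)) - ((a + of_nat m) gchoose (Suc k))"
      using gbinomial_Suc_Suc[of "a + of_nat m" k] by (simp add: algebra_simps)
    also have "\<dots> \<in> \<int>" using Suc.prems[of "Suc m"] Suc.prems[of m] m by (intro Ints_diff) auto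
    finally show "(a + of_nat m) gchoose k \<in> \<int>" .
  qed
qed

lemma not_all_mvars_in_ideal:
  assumes "is_alg_closure \<phi>" "has_proj_dim n \<phi> I d"
  shows "\<not> (\<forall>i\<le>n. mvar i \<in> I)"
proof
  assume all: "\<forall>i\<le>n. mvar i \<in> I"
  obtain Z where "irred_chain n (proj_variety n \<phi> I) d Z"
    using assms(2) by (auto simp: has_proj_dim_def)
  then have "Z 0 \<noteq> {}" "Z 0 \<subseteq> proj_variety n \<phi> I"
    by (auto simp: irred_chain_def zariski_irreducible_def)
  then obtain x where x: "x \<in> proj_variety n \<phi> I" by blast
  then obtain i where i: "i \<le> n" "x i \<noteq> 0" by (auto simp: proj_variety_def proj_pts_def)
  have "eval_mp \<phi> (mvar i) x = 0" using x all i by (auto simp: proj_variety_def)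
  moreover have "\<phi> 1 = 1" using assms(1) by (simp add: is_alg_closure_def is_field_emb_def)
  ultimately show False using i by (simp add: eval_mp_def mvar_def)
qed

lemma ideal_Int_graded_part_0:
  fixes I :: "('a::field) mpoly set"
  assumes "is_ideal n I" "\<not> (\<forall>i\<le>n. mvar i \<in> I)" "p \<in> I \<inter> graded_part n 0"
  shows "p = 0"
proof -
  have p: "p = mconst (lookup p 0)" using assms(3) graded_part_0_eq_mconst by blast
  then have "lookup p 0 = 0" using assms ideal_mconst_imp_mvars[OF assms(1), of "lookup p 0"] by auto
  then show ?thesis using p by (simp add: mconst_def)
qed

lemma hilbert_fun_linear_forms_insert:
  assumes "d < n" and u: "lin_indep_linear_forms n (n - d - 1) u"
    and f: "f \<in> polys n" "homog_of_deg e f" "f \<notin> gen_ideal n (u ` {..<n - d - 1})"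
  shows "hilbert_fun n (gen_ideal n (insert f (u ` {..<n - d - 1}))) m = hilbert_hypersurface d e m"
proof -
  obtain Q \<tau> where R: "linear_retraction n Q \<tau>" and card: "card Q + (n - d - 1) = n + 1"
    and U: "gen_ideal n (u ` {..<n - d - 1}) = msubst_kernel n \<tau>"
    by (rule linear_forms_retraction[OF u])
  have "u ` {..<n - d - 1} \<subseteq> polys n"
    using lin_indep_linear_formsD(3)[OF u] by (auto simp: graded_part_def)
  moreover have "f \<in> graded_part n e" using f by (simp add: graded_part_def)
  moreover have "f \<notin> msubst_kernel n \<tau>" using f(3) U by simp
  moreover have "card Q = d + 2" using card assms(1) by arith
  ultimately show ?thesis by (rule linear_retraction.hilbert_fun_insert[OF R _ U])
qed

lemma Ints_if_hilbert_formula: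
  assumes "\<forall>m\<ge>1. of_nat (hilbert_fun n I m)
             = ibinom (of_nat (m + d + 1)) (d + 1) - ibinom (of_nat m - E + of_nat d + 1) (d + 1)"
  shows "E \<in> \<int>"
proof -
  obtain M :: nat where M: "E \<le> of_nat M" using real_arch_simple[of E] by blast
  have gchoose_Ints: "(- E + of_nat d + 1 + of_nat m) gchoose (d + 1) \<in> \<int>" if m: "M + 1 \<le> m" for m
  proof -
    have "(of_nat M :: rat) \<le> of_nat m" "of_nat (d + 1) = (of_nat d + 1 :: rat)" using m by simp_all
    then have not_less: "\<not> of_nat m - E + of_nat d + 1 < of_nat (d + 1)" using M by linarith
    have "- E + of_nat d + 1 + of_nat m = of_nat m - E + of_nat d + 1" by (simp add: algebra_simps)
    then have "(- E + of_nat d + 1 + of_nat m) gchoose (d + 1) = ibinom (of_nat m - E + of_nat d + 1) (d + 1)"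
      unfolding ibinom_def using not_less by (simp only: if_False)
    also have "\<dots> = of_nat ((m + d + 1) choose (d + 1)) - of_nat (hilbert_fun n I m)"
    proof -
      have "of_nat (hilbert_fun n I m) = ibinom (of_nat (m + d + 1)) (d + 1)
          - ibinom (of_nat m - E + of_nat d + 1) (d + 1)"
        by (rule assms[rule_format]) (use m in simp)
      then show ?thesis unfolding ibinom_of_nat by linarith
    qed
    also have "\<dots> \<in> \<int>" by (intro Ints_diff Ints_of_nat)
    finally show ?thesis .
  qed
  have "- E + of_nat d + 1 \<in> \<int>" by (rule Ints_if_gbinomial_Ints[OF _ gchoose_Ints]) simp
  moreover have "of_nat d + 1 \<in> (\<int> :: rat set)" by (intro Ints_add Ints_of_nat Ints_1)
  ultimately have "of_nat d + 1 - (- E + of_nat d + 1) \<in> \<int>" by (intro Ints_diff)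
  then show ?thesis by simp
qed

lemma hilbert_formula_degree_nat:
  assumes I: "is_ideal n I" "\<not> (\<forall>i\<le>n. mvar i \<in> I)"
    and H: "\<forall>m\<ge>1. of_nat (hilbert_fun n I m)
             = ibinom (of_nat (m + d + 1)) (d + 1) - ibinom (of_nat m - E + of_nat d + 1) (d + 1)"
  obtains e where "1 \<le> e" "E = of_nat e"
proof -
  obtain z where z: "E = of_int z" using Ints_if_hilbert_formula[OF H] by (auto elim: Ints_cases)
  have "1 \<le> z"
  proof (rule ccontr)
    assume "\<not> 1 \<le> z"
    define N where "N = nat (int d + 2 - z)"
    have N: "of_nat 1 - E + of_nat d + 1 = (of_nat N :: rat)" "d + 2 \<le> N"
      using \<open>\<not> 1 \<le> z\<close> by (simp_all add: N_def z)
    have "(1 + d + 1) choose (d + 1) \<le> N choose (d + 1)"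
      using N(2) by (intro binomial_right_mono) simp
    then have le: "(of_nat ((1 + d + 1) choose (d + 1)) :: rat) \<le> of_nat (N choose (d + 1))"
      by (simp only: of_nat_le_iff)
    have "of_nat (hilbert_fun n I 1)
        = ibinom (of_nat (1 + d + 1)) (d + 1) - ibinom (of_nat 1 - E + of_nat d + 1) (d + 1)"
      by (rule H[rule_format]) simp
    then have "of_nat (hilbert_fun n I 1) = of_nat ((1 + d + 1) choose (d + 1)) - (of_nat (N choose (d + 1)) :: rat)"
      unfolding N(1) ibinom_of_nat .
    with le have "(of_nat (hilbert_fun n I 1) :: rat) \<le> 0" by linarith
    then have "hilbert_fun n I 1 = 0" by simp
    then have "V.dim (graded_part n 1 :: 'a mpoly set) \<le> V.dim (I \<inter> graded_part n 1)"
      using dim_Int_graded_part_add_hilbert_fun[of I n 1] by simp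
    then have "I \<inter> graded_part n 1 = graded_part n 1"
      by (intro V.subspace_eq_if_dim_le finite_dim_graded_part V.subspace_inter
          subspace_ideal[OF I(1)] subspace_graded_part) auto
    then show False using I(2) mvar_in_graded_part by blast
  qed
  then show thesis using that[of "nat z"] z by simp
qed

lemma linear_forms_in_ideal:
  fixes I :: "('a::field) mpoly set"
  assumes "r \<le> V.dim (I \<inter> graded_part n 1)"
  obtains u where "lin_indep_linear_forms n r u" "u ` {..<r} \<subseteq> I"
proof -
  obtain B where B: "B \<subseteq> I \<inter> graded_part n 1" "V.independent B" "card B = V.dim (I \<inter> graded_part n 1)"
    by (rule V.basis_exists)
  have "finite B"
    using V.independent_card_le_dim[OF finite_dim_graded_part B(2)] B(1) V.span_superset by blast
  then obtain C where C: "C \<subseteq> B" "card C = r" "finite C"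
    using obtain_subset_with_card_n[of r B] assms B(3) by (auto intro: finite_subset)
  obtain u where u: "bij_betw u {..<r} C"
    using ex_bij_betw_nat_finite[OF C(3)] C(2) by (auto simp: atLeast0LessThan)
  have u_inj: "inj_on u {..<r}" and u_img: "u ` {..<r} = C" using u by (auto simp: bij_betw_def)
  have "lin_indep_linear_forms n r u"
    unfolding lin_indep_linear_forms_def
  proof (intro conjI allI impI)
    show "u i \<in> graded_part n 1" if "i < r" for i
      using that u_img C(1) B(1) by blast
    fix c :: "nat \<Rightarrow> 'a" and i
    assume sum: "(\<Sum>i<r. msmult (c i) (u i)) = 0" and i: "i < r"
    let ?w = "\<lambda>v. c (the_inv_into {..<r} u v)"
    have "(\<Sum>v\<in>C. msmult (?w v) v) = (\<Sum>j<r. msmult (?w (u j)) (u j))"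
      unfolding u_img[symmetric] by (rule sum.reindex[OF u_inj, unfolded comp_def])
    also have "\<dots> = 0"
      using sum by (simp add: the_inv_into_f_f[OF u_inj])
    finally have "(\<Sum>v\<in>C. msmult (?w v) v) = 0" .
    moreover have "u i \<in> C" using i u_img by blast
    ultimately have "?w (u i) = 0"
      by (rule V.independentD[OF V.independent_mono[OF B(2) C(1)] C(3) order_refl])
    then show "c i = 0" using i by (simp add: the_inv_into_f_f[OF u_inj])
  qed
  moreover have "u ` {..<r} \<subseteq> I" using u C(1) B(1) by (auto simp: bij_betw_def)
  ultimately show thesis by (rule that)
qed

lemma homogeneous_ideal_subset:
  fixes I K :: "('a::field) mpoly set"
  assumes "homogeneous_ideal n I" "is_ideal n K" "\<And>m. I \<inter> graded_part n m \<subseteq> K"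
  shows "I \<subseteq> K"
proof
  fix p assume p: "p \<in> I"
  have "p \<in> polys_in {..n}" using p assms(1) by (auto simp: homogeneous_ideal_def is_ideal_def polys_eq_polys_in)
  then have "hcomp k p \<in> I \<inter> graded_part n k" for k
    using p assms(1) by (simp add: homogeneous_ideal_def graded_part_eq_forms_in hcomp_in_forms_in)
  then have "(\<Sum>k\<in>mon_deg ` keys p. hcomp k p) \<in> K"
    using assms(3) by (intro ideal_sum[OF assms(2)]) blast
  then show "p \<in> K" by (simp add: sum_hcomp)
qed

lemma Int_graded_part_eq_if_hilbert_fun_eq:
  fixes I K :: "('a::field) mpoly set"
  assumes "is_ideal n K" "K \<subseteq> I" "hilbert_fun n K m = hilbert_fun n I m"
  shows "K \<inter> graded_part n m = I \<inter> graded_part n m"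
proof -
  have "V.dim (I \<inter> graded_part n m) \<le> V.dim (K \<inter> graded_part n m)"
    using dim_Int_graded_part_add_hilbert_fun[of I n m] dim_Int_graded_part_add_hilbert_fun[of K n m]
      assms(3)
    by simp
  then show ?thesis
    using assms(2) by (intro V.subspace_eq_if_dim_le finite_dim_Int_graded_part V.subspace_inter
        subspace_ideal[OF assms(1)] subspace_graded_part) auto
qed

lemma ideal_eq_linear_forms_insert_if_hilbert_fun:
  fixes I :: "('a::field) mpoly set"
  assumes hom: "homogeneous_ideal n I" and no_vars: "\<not> (\<forall>i\<le>n. mvar i \<in> I)"
    and "d < n" "1 \<le> e" and H: "\<And>m. 1 \<le> m \<Longrightarrow> hilbert_fun n I m = hilbert_hypersurface d e m"
  obtains u f where "lin_indep_linear_forms n (n - d - 1) u" "f \<in> graded_part n e"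
    "f \<notin> gen_ideal n (u ` {..<n - d - 1})" "I = gen_ideal n (insert f (u ` {..<n - d - 1}))"
proof -
  define r where "r = n - d - 1"
  have I: "is_ideal n I" using hom by (simp add: homogeneous_ideal_def)
  have "hilbert_fun n I 1 \<le> d + 2" using H[of 1] by (simp add: hilbert_hypersurface_def)
  then have "r \<le> V.dim (I \<inter> graded_part n 1)"
    using dim_Int_graded_part_add_hilbert_fun[of I n 1] dim_graded_part_1[of n, where 'a = 'a] \<open>d < n\<close>
    by (simp add: r_def)
  then obtain u where u: "lin_indep_linear_forms n r u" "u ` {..<r} \<subseteq> I"
    by (rule linear_forms_in_ideal)
  obtain Q \<tau> where "linear_retraction n Q \<tau>" "card Q + r = n + 1"
    and J: "gen_ideal n (u ` {..<r}) = msubst_kernel n \<tau>"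
    by (rule linear_forms_retraction[OF u(1)])
  then interpret linear_retraction n Q \<tau> by simp
  have Q: "card Q = d + 2" using \<open>card Q + r = n + 1\<close> \<open>d < n\<close> by (simp add: r_def)
  obtain f where f: "f \<in> I" "f \<in> graded_part n e" "f \<notin> msubst_kernel n \<tau>"
    using graded_part_not_subset_kernel[OF Q H[OF \<open>1 \<le> e\<close>]] by blast
  let ?K = "gen_ideal n (insert f (u ` {..<r}))"
  have U: "u ` {..<r} \<subseteq> polys n" using u(2) I ideal_subset_polys by blast
  then have K: "is_ideal n ?K" using f(2) by (intro is_ideal_gen_ideal) (auto simp: graded_part_def)
  have KI: "?K \<subseteq> I" using gen_ideal_least[OF I] f(1) u(2) by blast
  have "I \<inter> graded_part n m \<subseteq> ?K" for m
  proof (cases "m = 0")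
    case True
    then show ?thesis using ideal_Int_graded_part_0[OF I no_vars] ideal_0[OF K] by blast
  next
    case False
    then have "hilbert_fun n ?K m = hilbert_fun n I m"
      using hilbert_fun_insert[OF U J f(2,3) Q] H[of m] by simp
    then show ?thesis using Int_graded_part_eq_if_hilbert_fun_eq[OF K KI] by blast
  qed
  then have "I = ?K" using homogeneous_ideal_subset[OF hom K] KI by blast
  then show thesis using that[OF u(1)[unfolded r_def] f(2)] f(3) J by (simp add: r_def)
qed

theorem proposition2p6:
  fixes n d :: nat and I :: "('a::field) mpoly set" and \<phi> :: "'a \<Rightarrow> 'b::field"
  assumes "is_alg_closure \<phi>"
    and "homogeneous_ideal n I"
    and "has_proj_dim n \<phi> I d"
    and "d < n"
  shows "(\<forall>m\<ge>1. of_nat (hilbert_fun n I m)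
            = ibinom (of_nat (m + d + 1)) (d + 1)
              - ibinom (of_nat m - ideal_degree n I d + of_nat d + 1) (d + 1))
    \<longleftrightarrow> (\<exists>u f. lin_indep_linear_forms n (n - d - 1) u
            \<and> f \<in> polys n \<and> homogeneous f
            \<and> f \<notin> gen_ideal n (u ` {..<n - d - 1})
            \<and> I = gen_ideal n (insert f (u ` {..<n - d - 1})))"
proof -
  have I: "is_ideal n I" using assms(2) by (simp add: homogeneous_ideal_def)
  have no_vars: "\<not> (\<forall>i\<le>n. mvar i \<in> I)" by (rule not_all_mvars_in_ideal[OF assms(1,3)])
  show ?thesis (is "?hilbert \<longleftrightarrow> ?generators")
  proof
    assume H: ?hilbert
    then obtain e where e: "1 \<le> e" "ideal_degree n I d = of_nat e"
      by (rule hilbert_formula_degree_nat[OF I no_vars])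
    have "hilbert_fun n I m = hilbert_hypersurface d e m" if "1 \<le> m" for m
      using H that unfolding e(2) hilbert_fun_eq_hilbert_hypersurface_iff by blast
    then obtain u f where "lin_indep_linear_forms n (n - d - 1) u" "f \<in> graded_part n e"
      "f \<notin> gen_ideal n (u ` {..<n - d - 1})" "I = gen_ideal n (insert f (u ` {..<n - d - 1}))"
      by (rule ideal_eq_linear_forms_insert_if_hilbert_fun[OF assms(2) no_vars assms(4) e(1)])
    then show ?generators by (auto simp: graded_part_def homogeneous_def)
  next
    assume ?generators
    then obtain u f e where "lin_indep_linear_forms n (n - d - 1) u" "f \<in> polys n"
      "homog_of_deg e f" "f \<notin> gen_ideal n (u ` {..<n - d - 1})"
      and I_eq: "I = gen_ideal n (insert f (u ` {..<n - d - 1}))"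
      by (auto simp: homogeneous_def)
    then have H: "hilbert_fun n I m = hilbert_hypersurface d e m" for m
      using hilbert_fun_linear_forms_insert[OF assms(4)] by simp
    then have degree: "ideal_degree n I d = of_nat e" by (intro ideal_degree_eqI)
    show ?hilbert unfolding degree hilbert_fun_eq_hilbert_hypersurface_iff using H by blast
  qed
qed

end
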